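(* For every integer $a\ge1$ and $p\ge0$ the function $\kappa_{p,a}$ is differentiable on $[H_-,H_+]$, and for every $a\ge1$ there exists a constant $c_a$ such that $\sup_{p\ge0}|\kappa_{p,a}'(H)|\le c_a$ for all $H\in[H_-,H_+]$.
   Context: $0<H_-\le H_+<3/4$. For $H\in(0,1)$, $W^H$ denotes a two-sided fractional Brownian motion with Hurst index $H$. For $p\ge0$, $l\in\mathbb Z$, $s\ge1$ and $\mathbf r=(r_1,\dots,r_s)$ positive integers with $|\mathbf r|=\sum r_i$, $\mathbf r!=\prod r_i!$, let $\mathfrak W^{H,\mathbf r}_{p,l}=\int_0^1W^H_{(l+u)2^{-p}}du$ if $|\mathbf r|=1$, and $\mathfrak W^{H,\mathbf r}_{p,l}=\frac1{\mathbf r!}\int_{[0,1]^s}\prod_{i=1}^s(W^H_{(l+u_i)2^{-p}}-W^H_{l2^{-p}})^{r_i}du$ if $|\mathbf r|\ge2$. For $a\ge1$, $$\kappa_{p,a}(H)=2^{-2p}\sum_{|l|<2^p}(2^p-|l|)\sum\frac{(-1)^{s_1+s_2}}{s_1s_2}\mathbb E\big[(\mathfrak W^{H,\mathbf r^1}_{p,2^p}-\mathfrak W^{H,\mathbf r^1}_{p,0})(\mathfrak W^{H,\mathbf r^2}_{p,2^p+l}-\mathfrak W^{H,\mathbf r^2}_{p,l})\big],$$ the inner sum being over $b_1,b_2\ge1$ with $b_1+b_2=2a$, $s_1,s_2\ge1$, $\mathbf r^i\in\{1,2,\dots\}^{s_i}$ with $|\mathbf r^i|=b_i$. *)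

theory Defs
  imports "HOL-Probability.Probability"
begin

definition fbm_cov :: "real \<Rightarrow> real \<Rightarrow> real \<Rightarrow> real" where
  "fbm_cov H s t = (\<bar>s\<bar> powr (2*H) + \<bar>t\<bar> powr (2*H) - \<bar>t - s\<bar> powr (2*H)) / 2"

text \<open>W is a two-sided fractional Brownian motion with Hurst index H on the probability
  space M: a centred Gaussian process (characterised through the joint characteristic
  functions of all finite families) with the fBm covariance and continuous sample paths.\<close>
definition is_fBM :: "'a measure \<Rightarrow> real \<Rightarrow> (real \<Rightarrow> 'a \<Rightarrow> real) \<Rightarrow> bool" where
  "is_fBM M H W \<longleftrightarrow> prob_space M \<and> (\<forall>t. W t \<in> borel_measurable M)
     \<and> (\<forall>\<omega>\<in>space M. continuous_on UNIV (\<lambda>t. W t \<omega>))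
     \<and> (\<forall>(n::nat) (t::nat \<Rightarrow> real) (c::nat \<Rightarrow> real).
          integral\<^sup>L M (\<lambda>\<omega>. cis (\<Sum>k<n. c k * W (t k) \<omega>))
          = complex_of_real (exp (- (1/2) * (\<Sum>j<n. \<Sum>k<n. c j * c k * fbm_cov H (t j) (t k)))))"

text \<open>The functionals \<open>\<frakW>^{H,r}_{p,l}\<close>; the multi-index r is a nonempty list of positive
  integers, s = length r, |r| = sum_list r, r! = product of factorials.\<close>
definition frakW :: "(real \<Rightarrow> 'a \<Rightarrow> real) \<Rightarrow> nat \<Rightarrow> int \<Rightarrow> nat list \<Rightarrow> 'a \<Rightarrow> real" where
  "frakW W p l r \<omega> =
    (if sum_list r = 1 then
       set_lebesgue_integral lborel {0..1} (\<lambda>u. W ((of_int l + u) * 2 powr (- real p)) \<omega>)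
     else
       (1 / real (prod_list (map fact r))) *
       set_lebesgue_integral (PiM {..<length r} (\<lambda>_. lborel)) (PiE {..<length r} (\<lambda>_. {0..1}))
         (\<lambda>u. \<Prod>i<length r. (W ((of_int l + u i) * 2 powr (- real p)) \<omega>
                                 - W (of_int l * 2 powr (- real p)) \<omega>) ^ (r ! i)))"

text \<open>Index set of the inner sum: pairs of multi-indices (r1, r2), each a nonempty list of
  positive integers, with |r1| + |r2| = 2a (then b_i = |r_i| \<ge> 1, s_i = length r_i \<ge> 1).\<close>
definition kappa_idx :: "nat \<Rightarrow> (nat list \<times> nat list) set" where
  "kappa_idx a = {(r1, r2). r1 \<noteq> [] \<and> r2 \<noteq> [] \<and> (\<forall>x\<in>set r1. x \<ge> 1) \<and> (\<forall>x\<in>set r2. x \<ge> 1)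
                    \<and> sum_list r1 + sum_list r2 = 2 * a}"

definition kappa :: "(real \<Rightarrow> 'a measure) \<Rightarrow> (real \<Rightarrow> real \<Rightarrow> 'a \<Rightarrow> real) \<Rightarrow> nat \<Rightarrow> nat \<Rightarrow> real \<Rightarrow> real" where
  "kappa M W p a H =
    2 powr (- 2 * real p) *
    (\<Sum>l\<in>{- (2^p - 1) .. 2^p - 1 :: int}. (2^p - \<bar>of_int l\<bar>) *
      (\<Sum>(r1, r2)\<in>kappa_idx a.
         (-1) ^ (length r1 + length r2) / (real (length r1) * real (length r2)) *
         integral\<^sup>L (M H) (\<lambda>\<omega>. (frakW (W H) p (2^p) r1 \<omega> - frakW (W H) p 0 r1 \<omega>)
                           * (frakW (W H) p (2^p + l) r2 \<omega> - frakW (W H) p l r2 \<omega>))))"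

end

theory Submission
  imports Defs
begin

text \<open>Each summand of \<open>\<kappa>_{p,a}(H)\<close> is a combination of expectations \<open>E[\<frakW>_A \<frakW>_B]\<close>. Writing each
  functional as an integral over a unit cube of a product of \<open>|r|\<close> increments of \<open>W\<close> and using
  Fubini, \<open>E[\<frakW>_A \<frakW>_B]\<close> becomes a cube average of mixed moments \<open>E[Y_0 \<cdots> Y_{2a-1}]\<close>, each \<open>Y_k\<close>
  a combination of two values of \<open>W\<close> at times in \<open>[-2, 2]\<close>. The polarization identity
  \<open>y_0 \<cdots> y_{n-1} = (1/n!) \<Sum>_S (-1)^{n-|S|} (\<Sum>_{k\<in>S} y_k)^n\<close> turns these into even moments
  \<open>E[Z^{2a}] = (2a)!/(2^a a!) Var(Z)^a\<close> of Gaussian sums, i.e. into polynomials in the covariances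
  \<open>R_H(s,t) = (|s|^{2H} + |t|^{2H} - |t-s|^{2H})/2\<close>. Their \<open>H\<close>-derivatives involve \<open>x^{2H} ln x\<close>,
  which is bounded on \<open>[0, 4]\<close> uniformly for \<open>H_- \<le> H \<le> 1\<close>. Hence dominated convergence
  differentiates under the cube integral with a bound independent of \<open>p\<close>, and the weights
  \<open>2^{-2p} (2^p - |l|)\<close> sum to at most 2.\<close>

lemma abs_sum_le_card_mult:
  fixes f :: "'b \<Rightarrow> real"
  assumes "\<And>i. i \<in> A \<Longrightarrow> \<bar>f i\<bar> \<le> B"
  shows "\<bar>sum f A\<bar> \<le> real (card A) * B"
proof -
  have "\<bar>sum f A\<bar> \<le> (\<Sum>i\<in>A. \<bar>f i\<bar>)" by (rule sum_abs)
  also have "\<dots> \<le> real (card A) * B" using sum_bounded_above[of A "\<lambda>i. \<bar>f i\<bar>" B] assms by simp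
  finally show ?thesis .
qed

section \<open>Even moments of Gaussian linear combinations\<close>

definition quad_form :: "(real \<Rightarrow> real \<Rightarrow> real) \<Rightarrow> 'b set \<Rightarrow> ('b \<Rightarrow> real) \<Rightarrow> ('b \<Rightarrow> real) \<Rightarrow> real" where
  "quad_form R K d t = (\<Sum>j\<in>K. \<Sum>k\<in>K. d j * d k * R (t j) (t k))"

definition normal_even_moment :: "nat \<Rightarrow> real" where
  "normal_even_moment a = fact (2*a) / (2^a * fact a)"

lemma normal_even_moment_nonneg: "0 \<le> normal_even_moment a"
  by (simp add: normal_even_moment_def)

lemma quad_form_scale: "quad_form R K (\<lambda>k. s * d k) t = s\<^sup>2 * quad_form R K d t"
  unfolding quad_form_def by (simp add: sum_distrib_left power2_eq_square algebra_simps)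

lemma quad_form_has_derivative:
  assumes "\<And>x y. ((\<lambda>H. R H x y) has_real_derivative R' H x y) (at H within S)"
  shows "((\<lambda>H. quad_form (R H) K d t) has_real_derivative quad_form (R' H) K d t) (at H within S)"
  unfolding quad_form_def by (intro DERIV_sum DERIV_cmult assms)

lemma abs_quad_form_le:
  assumes "\<And>k. k \<in> K \<Longrightarrow> \<bar>d k\<bar> \<le> 1"
    and "\<And>j k. j \<in> K \<Longrightarrow> k \<in> K \<Longrightarrow> \<bar>R (t j) (t k)\<bar> \<le> B"
  shows "\<bar>quad_form R K d t\<bar> \<le> real (card K) ^ 2 * B"
proof -
  have "\<bar>d j * d k * R (t j) (t k)\<bar> \<le> B" if "j \<in> K" "k \<in> K" for j k
  proof -
    have "\<bar>d j * d k * R (t j) (t k)\<bar> = \<bar>d j\<bar> * \<bar>d k\<bar> * \<bar>R (t j) (t k)\<bar>" by (simp add: abs_mult)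
    also have "\<dots> \<le> 1 * 1 * B" using assms that by (intro mult_mono) auto
    finally show ?thesis by simp
  qed
  then have "\<bar>quad_form R K d t\<bar> \<le> real (card K) * (real (card K) * B)"
    unfolding quad_form_def by (intro abs_sum_le_card_mult) auto
  then show ?thesis by (simp add: power2_eq_square)
qed

lemma char_distr:
  assumes "prob_space M" and [measurable]: "Z \<in> borel_measurable M"
  shows "char (distr M lborel Z) s = (\<integral>\<omega>. cis (s * Z \<omega>) \<partial>M)"
  unfolding char_def by (subst integral_distr) (auto simp: cis_conv_exp)

lemma (in prob_space) distr_of_gaussian_char:
  fixes Z :: "'a \<Rightarrow> real"
  assumes [measurable]: "Z \<in> borel_measurable M"
    and char_Z: "\<And>s. (\<integral>\<omega>. cis (s * Z \<omega>) \<partial>M) = complex_of_real (exp (- (1/2) * (s\<^sup>2 * q)))"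
  shows "0 \<le> q"
    and "q = 0 \<Longrightarrow> distr M lborel Z = return lborel 0"
    and "0 < q \<Longrightarrow> distr M lborel (\<lambda>\<omega>. Z \<omega> / sqrt q) = std_normal_distribution"
proof -
  have real_distr: "real_distribution (distr M lborel Y)" if [measurable]: "Y \<in> borel_measurable M" for Y
    by (auto simp: real_distribution_def real_distribution_axioms_def intro!: prob_space_distr)
  have char_distr_Z: "char (distr M lborel Z) s = complex_of_real (exp (- (1/2) * (s\<^sup>2 * q)))" for s
    using char_Z by (simp add: char_distr[OF prob_space_axioms])
  have "norm (char (distr M lborel Z) 1) \<le> 1"
    by (rule real_distribution.cmod_char_le_1[OF real_distr]) simp
  then show q: "0 \<le> q" using char_distr_Z[of 1] by simp
  show "distr M lborel Z = return lborel 0" if "q = 0"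
  proof (rule Levy_uniqueness[OF real_distr])
    show "real_distribution (return lborel (0::real))"
      by (auto simp: real_distribution_def real_distribution_axioms_def intro!: prob_space_return)
    show "char (distr M lborel Z) = char (return lborel 0)"
      using char_distr_Z that by (auto simp: fun_eq_iff char_def integral_return)
  qed simp
  show "distr M lborel (\<lambda>\<omega>. Z \<omega> / sqrt q) = std_normal_distribution" if "0 < q"
  proof (rule Levy_uniqueness[OF real_distr real_dist_normal_dist])
    have "char (distr M lborel (\<lambda>\<omega>. Z \<omega> / sqrt q)) s = char (distr M lborel Z) (s / sqrt q)" for s
      by (simp add: char_distr[OF prob_space_axioms] field_simps)
    then show "char (distr M lborel (\<lambda>\<omega>. Z \<omega> / sqrt q)) = char std_normal_distribution"
      using that by (simp add: fun_eq_iff char_distr_Z char_std_normal_distribution field_simps power2_eq_square)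
  qed simp
qed

lemma (in prob_space) even_moment_of_gaussian_char:
  fixes Z :: "'a \<Rightarrow> real"
  assumes [measurable]: "Z \<in> borel_measurable M"
    and char_Z: "\<And>s. (\<integral>\<omega>. cis (s * Z \<omega>) \<partial>M) = complex_of_real (exp (- (1/2) * (s\<^sup>2 * q)))"
  shows "integrable M (\<lambda>\<omega>. Z \<omega> ^ (2*a))"
    and "(\<integral>\<omega>. Z \<omega> ^ (2*a) \<partial>M) = q ^ a * normal_even_moment a"
proof -
  note distr_Z = distr_of_gaussian_char[OF assms]
  have "integrable M (\<lambda>\<omega>. Z \<omega> ^ (2*a)) \<and> (\<integral>\<omega>. Z \<omega> ^ (2*a) \<partial>M) = q ^ a * normal_even_moment a"
  proof (cases "q = 0")
    case True
    have "integrable (distr M lborel Z) (\<lambda>x. x ^ (2*a))" unfolding distr_Z(2)[OF True]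
      by (subst integrable_iff_bounded) (simp add: nn_integral_return)
    moreover have "(\<integral>x. x ^ (2*a) \<partial>distr M lborel Z) = 0 ^ (2*a)"
      unfolding distr_Z(2)[OF True] by (simp add: integral_return)
    ultimately show ?thesis using True
      by (cases a) (auto simp: integrable_distr_eq integral_distr normal_even_moment_def prob_space)
  next
    case False
    then have q: "0 < q" using distr_Z(1) by simp
    let ?Y = "\<lambda>\<omega>. Z \<omega> / sqrt q"
    have "integrable M (\<lambda>\<omega>. ?Y \<omega> ^ (2*a))"
      using std_normal_distribution_even_moments(2)[of a] unfolding distr_Z(3)[OF q, symmetric]
      by (simp add: integrable_distr_eq)
    moreover have "(\<integral>\<omega>. ?Y \<omega> ^ (2*a) \<partial>M) = normal_even_moment a"
      using std_normal_distribution_even_moments(1)[of a] unfolding distr_Z(3)[OF q, symmetric]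
      by (simp add: integral_distr normal_even_moment_def)
    moreover have "(\<lambda>\<omega>. Z \<omega> ^ (2*a)) = (\<lambda>\<omega>. q ^ a * ?Y \<omega> ^ (2*a))"
      using q by (auto simp: fun_eq_iff power_divide power_mult)
    ultimately show ?thesis by simp
  qed
  then show "integrable M (\<lambda>\<omega>. Z \<omega> ^ (2*a))" and "(\<integral>\<omega>. Z \<omega> ^ (2*a) \<partial>M) = q ^ a * normal_even_moment a"
    by auto
qed

lemma is_fBM_char_sum:
  assumes fbm: "is_fBM M H W" and fin: "finite K"
  shows "(\<integral>\<omega>. cis (\<Sum>k\<in>K. d k * W (t k) \<omega>) \<partial>M)
       = complex_of_real (exp (- (1/2) * quad_form (fbm_cov H) K d t))"
proof -
  obtain h where h: "bij_betw h {0..<card K} K" using ex_bij_betw_nat_finite[OF fin] by blast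
  have sum_eq: "(\<Sum>k\<in>K. d k * W (t k) \<omega>) = (\<Sum>i<card K. (d \<circ> h) i * W ((t \<circ> h) i) \<omega>)" for \<omega>
    using sum.reindex_bij_betw[OF h, of "\<lambda>k. d k * W (t k) \<omega>"] by (simp add: atLeast0LessThan)
  have form_eq: "quad_form (fbm_cov H) K d t
      = (\<Sum>j<card K. \<Sum>k<card K. (d \<circ> h) j * (d \<circ> h) k * fbm_cov H ((t \<circ> h) j) ((t \<circ> h) k))"
    unfolding quad_form_def
    using sum.reindex_bij_betw[OF h, of "\<lambda>j. \<Sum>k\<in>K. d j * d k * fbm_cov H (t j) (t k)"]
          sum.reindex_bij_betw[OF h, of "\<lambda>k. d _ * d k * fbm_cov H (t _) (t k)"]
    by (simp add: atLeast0LessThan)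
  show ?thesis unfolding sum_eq form_eq using fbm unfolding is_fBM_def by blast
qed

lemma is_fBM_lin_comb_moment:
  assumes fbm: "is_fBM M H W" and fin: "finite K"
  shows "0 \<le> quad_form (fbm_cov H) K d t"
    and "integrable M (\<lambda>\<omega>. (\<Sum>k\<in>K. d k * W (t k) \<omega>) ^ (2*a))"
    and "(\<integral>\<omega>. (\<Sum>k\<in>K. d k * W (t k) \<omega>) ^ (2*a) \<partial>M) = quad_form (fbm_cov H) K d t ^ a * normal_even_moment a"
proof -
  interpret prob_space M using fbm unfolding is_fBM_def by blast
  have [measurable]: "W s \<in> borel_measurable M" for s using fbm unfolding is_fBM_def by blast
  have char: "(\<integral>\<omega>. cis (s * (\<Sum>k\<in>K. d k * W (t k) \<omega>)) \<partial>M)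
      = complex_of_real (exp (- (1/2) * (s\<^sup>2 * quad_form (fbm_cov H) K d t)))" for s
    using is_fBM_char_sum[OF fbm fin, of "\<lambda>k. s * d k" t]
    by (simp add: quad_form_scale sum_distrib_left mult.assoc)
  show "0 \<le> quad_form (fbm_cov H) K d t"
    by (rule distr_of_gaussian_char(1)[OF _ char]) measurable
  show "integrable M (\<lambda>\<omega>. (\<Sum>k\<in>K. d k * W (t k) \<omega>) ^ (2*a))"
    and "(\<integral>\<omega>. (\<Sum>k\<in>K. d k * W (t k) \<omega>) ^ (2*a) \<partial>M) = quad_form (fbm_cov H) K d t ^ a * normal_even_moment a"
    by (rule even_moment_of_gaussian_char[OF _ char]; measurable)+
qed

section \<open>Polarization\<close>

definition alt_power_sum :: "(nat \<Rightarrow> 'a::comm_ring_1) \<Rightarrow> nat \<Rightarrow> nat \<Rightarrow> 'a" where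
  "alt_power_sum y n k = (\<Sum>S\<in>Pow {..<n}. (-1)^(n - card S) * (\<Sum>i\<in>S. y i)^k)"

lemma alt_power_sum_Suc:
  "alt_power_sum y (Suc n) k = (\<Sum>j<k. of_nat (k choose j) * y n ^ (k - j) * alt_power_sum y n j)"
proof -
  let ?s = "\<lambda>S. \<Sum>i\<in>S. y i"
  have Pow_Suc: "Pow {..<Suc n} = Pow {..<n} \<union> insert n ` Pow {..<n}"
    by (simp add: lessThan_Suc Pow_insert)
  have inj: "inj_on (insert n) (Pow {..<n})"
    unfolding inj_on_def by (metis Pow_iff insert_Diff1 lessThan_iff less_irrefl subsetD Diff_insert_absorb)
  have with_n: "(\<Sum>S\<in>insert n ` Pow {..<n}. (-1)^(Suc n - card S) * ?s S ^ k)
      = (\<Sum>S\<in>Pow {..<n}. (-1)^(n - card S) * (y n + ?s S)^k)"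
  proof (subst sum.reindex[OF inj], intro sum.cong refl)
    fix S assume "S \<in> Pow {..<n}"
    then have "n \<notin> S" "finite S" using finite_subset by auto
    then show "((\<lambda>S. (-1)^(Suc n - card S) * ?s S ^ k) \<circ> insert n) S = (-1)^(n - card S) * (y n + ?s S)^k"
      by (simp add: card_insert_if)
  qed
  have without_n: "(\<Sum>S\<in>Pow {..<n}. (-1)^(Suc n - card S) * ?s S ^ k)
      = - (\<Sum>S\<in>Pow {..<n}. (-1)^(n - card S) * ?s S ^ k)"
  proof -
    have "Suc n - card S = Suc (n - card S)" if "S \<in> Pow {..<n}" for S
      using that card_mono[of "{..<n}" S] by auto
    then show ?thesis unfolding sum_negf[symmetric] by (intro sum.cong refl) auto
  qed
  have binomial: "(y n + s)^k - s^k = (\<Sum>j<k. of_nat (k choose j) * y n ^ (k - j) * s^j)" for s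
  proof -
    have "(y n + s)^k = (\<Sum>j\<le>k. of_nat (k choose j) * s^j * y n ^ (k - j))"
      by (subst add.commute) (rule binomial_ring)
    also have "\<dots> = (\<Sum>j<k. of_nat (k choose j) * s^j * y n ^ (k - j)) + s^k"
      by (simp add: lessThan_Suc_atMost[symmetric])
    finally show ?thesis by (simp add: algebra_simps)
  qed
  have "alt_power_sum y (Suc n) k
      = (\<Sum>S\<in>Pow {..<n}. (-1)^(Suc n - card S) * ?s S ^ k)
        + (\<Sum>S\<in>insert n ` Pow {..<n}. (-1)^(Suc n - card S) * ?s S ^ k)"
    unfolding alt_power_sum_def Pow_Suc by (rule sum.union_disjoint) auto
  also have "\<dots> = (\<Sum>S\<in>Pow {..<n}. (-1)^(n - card S) * ((y n + ?s S)^k - ?s S ^ k))"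
    unfolding with_n without_n by (simp add: sum_subtractf right_diff_distrib)
  also have "\<dots> = (\<Sum>S\<in>Pow {..<n}. \<Sum>j<k. (-1)^(n - card S) * (of_nat (k choose j) * y n ^ (k - j) * ?s S ^ j))"
    by (simp add: binomial sum_distrib_left)
  also have "\<dots> = (\<Sum>j<k. of_nat (k choose j) * y n ^ (k - j) * alt_power_sum y n j)"
    unfolding alt_power_sum_def by (subst sum.swap) (simp add: sum_distrib_left algebra_simps)
  finally show ?thesis .
qed

lemma alt_power_sum_le:
  "k \<le> n \<Longrightarrow> alt_power_sum y n k = (if k < n then 0 else fact n * (\<Prod>i<n. y i))"
proof (induction n arbitrary: k)
  case 0
  then show ?case by (simp add: alt_power_sum_def)
next
  case (Suc n)
  have "alt_power_sum y (Suc n) k = (\<Sum>j<k. of_nat (k choose j) * y n ^ (k - j) * alt_power_sum y n j)"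
    by (rule alt_power_sum_Suc)
  also have "\<dots> = (\<Sum>j<k. if j = n then of_nat (k choose j) * y n ^ (k - j) * (fact n * (\<Prod>i<n. y i)) else 0)"
    using Suc by (intro sum.cong refl) auto
  also have "\<dots> = (if k < Suc n then 0 else fact (Suc n) * (\<Prod>i<Suc n. y i))"
  proof (cases "k < Suc n")
    case False
    then have "k = Suc n" using Suc.prems by simp
    then show ?thesis by (simp add: algebra_simps)
  qed simp
  finally show ?case .
qed

lemma prod_polarization:
  fixes y :: "nat \<Rightarrow> 'a::field_char_0"
  shows "(\<Prod>i<n. y i) = (\<Sum>S\<in>Pow {..<n}. (-1)^(n - card S) * (\<Sum>i\<in>S. y i)^n) / fact n"
  using alt_power_sum_le[of n n y] by (simp add: alt_power_sum_def)

lemma prod_pair_comb_polarization: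
  fixes c \<tau> :: "nat \<Rightarrow> nat \<Rightarrow> real" and f :: "real \<Rightarrow> real"
  shows "(\<Prod>i<n. \<Sum>j<2. c i j * f (\<tau> i j))
       = (\<Sum>S\<in>Pow {..<n}. (-1)^(n - card S) * (\<Sum>k\<in>S \<times> {..<2}. case_prod c k * f (case_prod \<tau> k))^n) / fact n"
proof -
  have "(\<Sum>i\<in>S. \<Sum>j<2. c i j * f (\<tau> i j)) = (\<Sum>k\<in>S \<times> {..<2}. case_prod c k * f (case_prod \<tau> k))"
    if "S \<in> Pow {..<n}" for S
    using that finite_subset[of S "{..<n}"] by (simp add: sum.cartesian_product split_beta)
  then show ?thesis
    unfolding prod_polarization[of "\<lambda>i. \<Sum>j<2. c i j * f (\<tau> i j)"]
    by (intro arg_cong[where f="\<lambda>x. x / _"] sum.cong refl) auto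
qed

text \<open>By polarization, \<open>mixed_moment R a c \<tau>\<close> is \<open>E[\<Prod>i<2a. \<Sum>j<2. c i j * X (\<tau> i j)]\<close> for a centred
  Gaussian process \<open>X\<close> with covariance \<open>R\<close>.\<close>
definition mixed_moment ::
    "(real \<Rightarrow> real \<Rightarrow> real) \<Rightarrow> nat \<Rightarrow> (nat \<Rightarrow> nat \<Rightarrow> real) \<Rightarrow> (nat \<Rightarrow> nat \<Rightarrow> real) \<Rightarrow> real" where
  "mixed_moment R a c \<tau> =
     (\<Sum>S\<in>Pow {..<2*a}. (-1)^(2*a - card S) * quad_form R (S \<times> {..<2}) (case_prod c) (case_prod \<tau>) ^ a)
     * normal_even_moment a / fact (2*a)"

definition mixed_moment_deriv :: "(real \<Rightarrow> real \<Rightarrow> real) \<Rightarrow> (real \<Rightarrow> real \<Rightarrow> real) \<Rightarrow> nat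
    \<Rightarrow> (nat \<Rightarrow> nat \<Rightarrow> real) \<Rightarrow> (nat \<Rightarrow> nat \<Rightarrow> real) \<Rightarrow> real" where
  "mixed_moment_deriv R R' a c \<tau> =
     (\<Sum>S\<in>Pow {..<2*a}. (-1)^(2*a - card S) * (real a *
        (quad_form R' (S \<times> {..<2}) (case_prod c) (case_prod \<tau>) *
         quad_form R (S \<times> {..<2}) (case_prod c) (case_prod \<tau>) ^ (a - 1))))
     * normal_even_moment a / fact (2*a)"

lemma mixed_moment_has_derivative:
  assumes "\<And>x y. ((\<lambda>H. R H x y) has_real_derivative R' H x y) (at H within S)"
  shows "((\<lambda>H. mixed_moment (R H) a c \<tau>) has_real_derivative mixed_moment_deriv (R H) (R' H) a c \<tau>)
           (at H within S)"
proof -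
  have "((\<lambda>H. quad_form (R H) K d t ^ a) has_real_derivative
           real a * (quad_form (R' H) K d t * quad_form (R H) K d t ^ (a - 1))) (at H within S)"
    for K :: "(nat \<times> nat) set" and d t
    using DERIV_power[OF quad_form_has_derivative[where R=R and R'=R', OF assms], of K d t a] by simp
  then show ?thesis unfolding mixed_moment_def[abs_def] mixed_moment_deriv_def
    by (intro DERIV_cdivide DERIV_cmult_right DERIV_sum DERIV_cmult)
qed

definition mixed_moment_bound :: "nat \<Rightarrow> real \<Rightarrow> real" where
  "mixed_moment_bound a B = 4^a * ((4 * real a)\<^sup>2 * B) ^ a * normal_even_moment a / fact (2*a)"

definition mixed_moment_deriv_bound :: "nat \<Rightarrow> real \<Rightarrow> real \<Rightarrow> real" where
  "mixed_moment_deriv_bound a B B' =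
     4^a * (real a * ((4 * real a)\<^sup>2 * B' * ((4 * real a)\<^sup>2 * B) ^ (a - 1))) * normal_even_moment a / fact (2*a)"

lemma abs_quad_form_pairs_le:
  fixes c \<tau> :: "nat \<Rightarrow> nat \<Rightarrow> real"
  assumes S: "S \<subseteq> {..<2*a}" and c: "\<And>i j. \<bar>c i j\<bar> \<le> 1"
    and R: "\<And>i j i' j'. \<bar>R (\<tau> i j) (\<tau> i' j')\<bar> \<le> B"
  shows "\<bar>quad_form R (S \<times> {..<2}) (case_prod c) (case_prod \<tau>)\<bar> \<le> (4 * real a)\<^sup>2 * B"
proof -
  have "0 \<le> B" using R[of 0 0 0 0] by linarith
  have "card (S \<times> {..<2::nat}) = 2 * card S" by (simp add: card_cartesian_product)
  also have "\<dots> \<le> 4 * a" using card_mono[OF _ S] by simp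
  finally have "real (card (S \<times> {..<2::nat})) ^ 2 \<le> (4 * real a)\<^sup>2"
    by (intro power_mono) auto
  moreover have "\<bar>quad_form R (S \<times> {..<2}) (case_prod c) (case_prod \<tau>)\<bar> \<le> real (card (S \<times> {..<2::nat})) ^ 2 * B"
    using c R by (intro abs_quad_form_le) auto
  ultimately show ?thesis using \<open>0 \<le> B\<close> by (meson mult_right_mono order_trans)
qed

lemma abs_mixed_moment_le:
  assumes c: "\<And>i j. \<bar>c i j\<bar> \<le> 1" and R: "\<And>i j i' j'. \<bar>R (\<tau> i j) (\<tau> i' j')\<bar> \<le> B"
  shows "\<bar>mixed_moment R a c \<tau>\<bar> \<le> mixed_moment_bound a B"
proof -
  let ?q = "\<lambda>S. quad_form R (S \<times> {..<2}) (case_prod c) (case_prod \<tau>)"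
  have "\<bar>(-1)^(2*a - card S) * ?q S ^ a\<bar> \<le> ((4 * real a)\<^sup>2 * B) ^ a" if "S \<in> Pow {..<2*a}" for S
    using abs_quad_form_pairs_le[of S a c R \<tau> B] that c R by (auto simp: abs_mult power_abs intro: power_mono)
  then have "\<bar>\<Sum>S\<in>Pow {..<2*a}. (-1)^(2*a - card S) * ?q S ^ a\<bar> \<le> 4^a * ((4 * real a)\<^sup>2 * B) ^ a"
    using abs_sum_le_card_mult[of "Pow {..<2*a}"] by (simp add: card_Pow power_mult)
  then show ?thesis unfolding mixed_moment_def mixed_moment_bound_def
    using normal_even_moment_nonneg[of a] by (simp add: abs_mult mult_right_mono divide_right_mono)
qed

lemma abs_mixed_moment_deriv_le:
  assumes c: "\<And>i j. \<bar>c i j\<bar> \<le> 1"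
    and R: "\<And>i j i' j'. \<bar>R (\<tau> i j) (\<tau> i' j')\<bar> \<le> B"
    and R': "\<And>i j i' j'. \<bar>R' (\<tau> i j) (\<tau> i' j')\<bar> \<le> B'"
  shows "\<bar>mixed_moment_deriv R R' a c \<tau>\<bar> \<le> mixed_moment_deriv_bound a B B'"
proof -
  let ?q = "\<lambda>R S. quad_form R (S \<times> {..<2}) (case_prod c) (case_prod \<tau>)"
  have "0 \<le> B'" using R'[of 0 0 0 0] by linarith
  have "\<bar>(-1)^(2*a - card S) * (real a * (?q R' S * ?q R S ^ (a - 1)))\<bar>
      \<le> real a * ((4 * real a)\<^sup>2 * B' * ((4 * real a)\<^sup>2 * B) ^ (a - 1))" if "S \<in> Pow {..<2*a}" for S
  proof -
    have "\<bar>?q R' S\<bar> \<le> (4 * real a)\<^sup>2 * B'" "\<bar>?q R S\<bar> \<le> (4 * real a)\<^sup>2 * B"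
      using abs_quad_form_pairs_le[of S a c] that c R R' by auto
    then have "\<bar>?q R' S\<bar> * \<bar>?q R S\<bar> ^ (a - 1) \<le> (4 * real a)\<^sup>2 * B' * ((4 * real a)\<^sup>2 * B) ^ (a - 1)"
      using \<open>0 \<le> B'\<close> by (intro mult_mono power_mono) auto
    then show ?thesis by (simp add: abs_mult power_abs mult_left_mono)
  qed
  then have "\<bar>\<Sum>S\<in>Pow {..<2*a}. (-1)^(2*a - card S) * (real a * (?q R' S * ?q R S ^ (a - 1)))\<bar>
      \<le> 4^a * (real a * ((4 * real a)\<^sup>2 * B' * ((4 * real a)\<^sup>2 * B) ^ (a - 1)))"
    using abs_sum_le_card_mult[of "Pow {..<2*a}"] by (simp add: card_Pow power_mult)
  then show ?thesis unfolding mixed_moment_deriv_def mixed_moment_deriv_bound_def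
    using normal_even_moment_nonneg[of a] by (simp add: abs_mult mult_right_mono divide_right_mono)
qed

section \<open>The covariance of fractional Brownian motion as a function of the Hurst index\<close>

definition fbm_cov_deriv :: "real \<Rightarrow> real \<Rightarrow> real \<Rightarrow> real" where
  "fbm_cov_deriv H s t =
     ln \<bar>s\<bar> * \<bar>s\<bar> powr (2*H) + ln \<bar>t\<bar> * \<bar>t\<bar> powr (2*H) - ln \<bar>t - s\<bar> * \<bar>t - s\<bar> powr (2*H)"

lemma powr_has_derivative_exponent:
  assumes "0 \<le> x"
  shows "((\<lambda>H. x powr (2*H)) has_real_derivative 2 * ln x * x powr (2*H)) (at H within S)"
proof (cases "x = 0")
  case False
  then have "(\<lambda>H. x powr (2*H)) = (\<lambda>H. exp (2 * H * ln x))" using assms by (simp add: powr_def fun_eq_iff)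
  then show ?thesis using False assms by (auto intro!: derivative_eq_intros simp: powr_def)
qed simp

lemma fbm_cov_has_derivative:
  "((\<lambda>H. fbm_cov H s t) has_real_derivative fbm_cov_deriv H s t) (at H within S)"
proof -
  have "((\<lambda>H. fbm_cov H s t) has_real_derivative
      (2 * ln \<bar>s\<bar> * \<bar>s\<bar> powr (2*H) + 2 * ln \<bar>t\<bar> * \<bar>t\<bar> powr (2*H) - 2 * ln \<bar>t - s\<bar> * \<bar>t - s\<bar> powr (2*H)) / 2)
      (at H within S)"
    unfolding fbm_cov_def[abs_def] by (intro DERIV_cdivide DERIV_diff DERIV_add powr_has_derivative_exponent) auto
  then show ?thesis by (rule DERIV_cong) (simp add: fbm_cov_deriv_def)
qed

lemma powr_le_square_bound:
  fixes x e b :: real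
  assumes "0 \<le> x" "x \<le> b" "1 \<le> b" "0 \<le> e" "e \<le> 2"
  shows "x powr e \<le> b\<^sup>2"
proof (cases "x \<le> 1")
  case True
  then have "x powr e \<le> 1 powr e" using assms by (intro powr_mono2) auto
  also have "\<dots> \<le> b\<^sup>2" using assms by (simp add: one_le_power)
  finally show ?thesis .
next
  case False
  then have "x powr e \<le> x powr 2" using assms by (intro powr_mono) auto
  also have "\<dots> = x\<^sup>2" using False by (simp add: powr_realpow)
  also have "\<dots> \<le> b\<^sup>2" using assms by (intro power_mono) auto
  finally show ?thesis .
qed

lemma abs_fbm_cov_le:
  assumes "\<bar>s\<bar> \<le> 2" "\<bar>t\<bar> \<le> 2" "0 \<le> H" "H \<le> 1"
  shows "\<bar>fbm_cov H s t\<bar> \<le> 16"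
proof -
  have "\<bar>t - s\<bar> \<le> 4" using assms by linarith
  then have "\<bar>s\<bar> powr (2*H) \<le> 16" "\<bar>t\<bar> powr (2*H) \<le> 16" "\<bar>t - s\<bar> powr (2*H) \<le> 16"
    using powr_le_square_bound[of _ 4 "2*H"] assms by auto
  moreover have "\<bar>(x + y - z) / 2\<bar> \<le> 16" if "0 \<le> x" "x \<le> 16" "0 \<le> y" "y \<le> 16" "0 \<le> z" "z \<le> 16"
    for x y z :: real
    using that by (simp add: abs_le_iff)
  ultimately show ?thesis unfolding fbm_cov_def by simp
qed

lemma neg_ln_mult_powr_le:
  fixes x e :: real
  assumes "0 < x" "x < 1" "0 < e"
  shows "- ln x * x powr e \<le> 1 / e"
proof -
  have "e * ln (1/x) \<le> exp (e * ln (1/x))" using exp_ge_add_one_self[of "e * ln (1/x)"] by linarith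
  also have "exp (e * ln (1/x)) = (1/x) powr e" using assms by (simp add: powr_def)
  also have "\<dots> = 1 / x powr e" using assms by (simp add: powr_divide)
  finally have "e * (- ln x) \<le> 1 / x powr e" using assms by (simp add: ln_div)
  then show ?thesis using assms by (simp add: field_simps)
qed

lemma abs_ln_mult_powr_le:
  fixes x Hm H :: real
  assumes "0 \<le> x" "x \<le> 4" "0 < Hm" "Hm \<le> H" "H \<le> 1"
  shows "\<bar>ln x * x powr (2*H)\<bar> \<le> 1 / (2*Hm) + 48"
proof -
  consider "x = 0" | "0 < x" "x < 1" | "1 \<le> x" using assms by linarith
  then show ?thesis
  proof cases
    case 2
    have "- ln x * x powr (2*H) \<le> - ln x * x powr (2*Hm)"
      using 2 assms by (intro mult_left_mono powr_mono') auto
    also have "\<dots> \<le> 1 / (2*Hm)" using neg_ln_mult_powr_le[OF 2, of "2*Hm"] assms by simp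
    finally show ?thesis using 2 assms by (simp add: abs_mult)
  next
    case 3
    have "0 \<le> ln x" "ln x \<le> 3" using 3 assms ln_le_minus_one[of x] by auto
    moreover have "0 \<le> x powr (2*H)" "x powr (2*H) \<le> 16" using powr_le_square_bound[of x 4 "2*H"] assms by auto
    ultimately have "0 \<le> ln x * x powr (2*H)" and "ln x * x powr (2*H) \<le> 3 * 16"
      by (simp, intro mult_mono) auto
    then show ?thesis using assms by (simp add: add_increasing)
  qed (use assms in simp)
qed

lemma abs_fbm_cov_deriv_le:
  assumes "\<bar>s\<bar> \<le> 2" "\<bar>t\<bar> \<le> 2" "0 < Hm" "Hm \<le> H" "H \<le> 1"
  shows "\<bar>fbm_cov_deriv H s t\<bar> \<le> 3 * (1 / (2*Hm) + 48)"
proof -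
  have "\<bar>t - s\<bar> \<le> 4" using assms by linarith
  then have "\<bar>ln \<bar>s\<bar> * \<bar>s\<bar> powr (2*H)\<bar> \<le> 1 / (2*Hm) + 48" "\<bar>ln \<bar>t\<bar> * \<bar>t\<bar> powr (2*H)\<bar> \<le> 1 / (2*Hm) + 48"
    "\<bar>ln \<bar>t - s\<bar> * \<bar>t - s\<bar> powr (2*H)\<bar> \<le> 1 / (2*Hm) + 48"
    using abs_ln_mult_powr_le assms by auto
  moreover have "\<bar>x + y - z\<bar> \<le> 3 * k" if "\<bar>x\<bar> \<le> k" "\<bar>y\<bar> \<le> k" "\<bar>z\<bar> \<le> k" for x y z k :: real
    using that by (simp add: abs_le_iff)
  ultimately show ?thesis unfolding fbm_cov_deriv_def by blast
qed

lemma is_fBM_integral_prod: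
  fixes c \<tau> :: "nat \<Rightarrow> nat \<Rightarrow> real"
  assumes fbm: "is_fBM M H W"
  shows "integrable M (\<lambda>\<omega>. \<Prod>i<2*a. \<Sum>j<2. c i j * W (\<tau> i j) \<omega>)"
    and "(\<integral>\<omega>. (\<Prod>i<2*a. \<Sum>j<2. c i j * W (\<tau> i j) \<omega>) \<partial>M) = mixed_moment (fbm_cov H) a c \<tau>"
proof -
  let ?Z = "\<lambda>S \<omega>. \<Sum>k\<in>S \<times> {..<2}. case_prod c k * W (case_prod \<tau> k) \<omega>"
  have fin: "finite (S \<times> {..<2::nat})" if "S \<in> Pow {..<2*a}" for S
    using that finite_subset[of S "{..<2*a}"] by auto
  note moment = is_fBM_lin_comb_moment[OF fbm fin]
  have prod_eq: "(\<lambda>\<omega>. \<Prod>i<2*a. \<Sum>j<2. c i j * W (\<tau> i j) \<omega>)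
      = (\<lambda>\<omega>. (\<Sum>S\<in>Pow {..<2*a}. (-1)^(2*a - card S) * ?Z S \<omega> ^ (2*a)) / fact (2*a))"
    by (rule ext) (rule prod_pair_comb_polarization)
  show "integrable M (\<lambda>\<omega>. \<Prod>i<2*a. \<Sum>j<2. c i j * W (\<tau> i j) \<omega>)"
    unfolding prod_eq using moment(2) by (intro integrable_divide integrable_sum integrable_mult_right) auto
  have "(\<integral>\<omega>. (\<Sum>S\<in>Pow {..<2*a}. (-1)^(2*a - card S) * ?Z S \<omega> ^ (2*a)) \<partial>M)
      = (\<Sum>S\<in>Pow {..<2*a}. (-1)^(2*a - card S) * (\<integral>\<omega>. ?Z S \<omega> ^ (2*a) \<partial>M))"
    using moment(2) by (subst Bochner_Integration.integral_sum) auto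
  also have "\<dots> = (\<Sum>S\<in>Pow {..<2*a}. (-1)^(2*a - card S) *
      (quad_form (fbm_cov H) (S \<times> {..<2}) (case_prod c) (case_prod \<tau>) ^ a * normal_even_moment a))"
    using moment(3) by (intro sum.cong refl) auto
  also have "\<dots> = (\<Sum>S\<in>Pow {..<2*a}. (-1)^(2*a - card S) *
      quad_form (fbm_cov H) (S \<times> {..<2}) (case_prod c) (case_prod \<tau>) ^ a) * normal_even_moment a"
    by (simp add: sum_distrib_right mult.assoc)
  finally show "(\<integral>\<omega>. (\<Prod>i<2*a. \<Sum>j<2. c i j * W (\<tau> i j) \<omega>) \<partial>M) = mixed_moment (fbm_cov H) a c \<tau>"
    unfolding prod_eq mixed_moment_def by simp
qed

lemma floor_mult_div_tendsto: "(\<lambda>n. of_int \<lfloor>real (Suc n) * t\<rfloor> / real (Suc n)) \<longlonglongrightarrow> t"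
proof (rule LIM_zero_cancel, rule Lim_null_comparison)
  show "\<forall>\<^sub>F n in sequentially. norm (of_int \<lfloor>real (Suc n) * t\<rfloor> / real (Suc n) - t) \<le> inverse (real (Suc n))"
  proof (rule always_eventually, rule allI)
    fix n
    have "\<bar>of_int \<lfloor>real (Suc n) * t\<rfloor> - real (Suc n) * t\<bar> \<le> 1" by linarith
    moreover have "of_int \<lfloor>real (Suc n) * t\<rfloor> / real (Suc n) - t
        = (of_int \<lfloor>real (Suc n) * t\<rfloor> - real (Suc n) * t) / real (Suc n)"
      by (simp add: field_simps)
    ultimately show "norm (of_int \<lfloor>real (Suc n) * t\<rfloor> / real (Suc n) - t) \<le> inverse (real (Suc n))"
      by (simp add: abs_divide divide_le_eq inverse_eq_divide)
  qed
  show "(\<lambda>n. inverse (real (Suc n))) \<longlonglongrightarrow> 0" by (rule LIMSEQ_inverse_real_of_nat)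
qed

text \<open>A process with continuous paths is the pointwise limit of its step approximations on the grids
  \<open>\<int> / (n + 1)\<close>, which are jointly measurable.\<close>
lemma measurable_continuous_process_pair:
  fixes X :: "real \<Rightarrow> 'a \<Rightarrow> real"
  assumes meas: "\<And>t. X t \<in> borel_measurable M"
    and cont: "\<And>\<omega>. \<omega> \<in> space M \<Longrightarrow> continuous_on UNIV (\<lambda>t. X t \<omega>)"
  shows "(\<lambda>x. X (fst x) (snd x)) \<in> borel_measurable (lborel \<Otimes>\<^sub>M M)"
proof (rule borel_measurable_LIMSEQ_real)
  let ?X = "\<lambda>n x. X (of_int \<lfloor>real (Suc n) * fst x\<rfloor> / real (Suc n)) (snd x)"
  show "?X n \<in> borel_measurable (lborel \<Otimes>\<^sub>M M)" for n
  proof (rule measurable_compose_countable[where f="\<lambda>k x. X (of_int k / real (Suc n)) (snd x)"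
        and g="\<lambda>x. \<lfloor>real (Suc n) * fst x\<rfloor>"])
    show "(\<lambda>x. X (of_int k / real (Suc n)) (snd x)) \<in> borel_measurable (lborel \<Otimes>\<^sub>M M)" for k :: int
      using meas by measurable
  qed measurable
  fix x :: "real \<times> 'a" assume "x \<in> space (lborel \<Otimes>\<^sub>M M)"
  then have "snd x \<in> space M" by (simp add: space_pair_measure mem_Times_iff)
  then have "isCont (\<lambda>t. X t (snd x)) (fst x)" using cont continuous_on_eq_continuous_at[of UNIV] by auto
  then show "(\<lambda>n. ?X n x) \<longlonglongrightarrow> X (fst x) (snd x)"
    using isCont_tendsto_compose[OF _ floor_mult_div_tendsto] by blast
qed

lemma measurable_continuous_process_compose:
  fixes X :: "real \<Rightarrow> 'a \<Rightarrow> real"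
  assumes "\<And>t. X t \<in> borel_measurable M" and "\<And>\<omega>. \<omega> \<in> space M \<Longrightarrow> continuous_on UNIV (\<lambda>t. X t \<omega>)"
    and "f \<in> borel_measurable N"
  shows "(\<lambda>x. X (f (fst x)) (snd x)) \<in> borel_measurable (N \<Otimes>\<^sub>M M)"
proof -
  have "(\<lambda>x. (f (fst x), snd x)) \<in> measurable (N \<Otimes>\<^sub>M M) (lborel \<Otimes>\<^sub>M M)"
    using assms(3) by (intro measurable_Pair) (auto simp: measurable_lborel2)
  from measurable_compose[OF this measurable_continuous_process_pair[OF assms(1,2)]] show ?thesis by simp
qed

lemma is_fBM_integrable_pair_prod:
  fixes c :: "nat \<Rightarrow> nat \<Rightarrow> real" and \<tau> :: "'w \<Rightarrow> nat \<Rightarrow> nat \<Rightarrow> real"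
  assumes fbm: "is_fBM M H W" and H: "0 \<le> H" "H \<le> 1" and N: "finite_measure N"
    and \<tau>_meas: "\<And>i j. (\<lambda>w. \<tau> w i j) \<in> borel_measurable N"
    and c: "\<And>i j. \<bar>c i j\<bar> \<le> 1" and \<tau>: "\<And>w i j. \<bar>\<tau> w i j\<bar> \<le> 2"
  shows "integrable (N \<Otimes>\<^sub>M M) (\<lambda>x. \<Prod>i<2*a. \<Sum>j<2. c i j * W (\<tau> (fst x) i j) (snd x))"
proof -
  interpret M: prob_space M using fbm unfolding is_fBM_def by blast
  interpret N: finite_measure N by (rule N)
  let ?Z = "\<lambda>S w \<omega>. \<Sum>k\<in>S \<times> {..<2}. case_prod c k * W (case_prod (\<tau> w) k) \<omega>"
  have [measurable]: "(\<lambda>x. W (\<tau> (fst x) i j) (snd x)) \<in> borel_measurable (N \<Otimes>\<^sub>M M)" for i j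
    using fbm \<tau>_meas unfolding is_fBM_def by (intro measurable_continuous_process_compose) auto
  have Z_meas: "(\<lambda>x. ?Z S (fst x) (snd x) ^ (2*a)) \<in> borel_measurable (N \<Otimes>\<^sub>M M)" for S
    by (auto simp: split_beta intro!: borel_measurable_sum borel_measurable_times borel_measurable_power)
  have prod_eq: "(\<lambda>x. \<Prod>i<2*a. \<Sum>j<2. c i j * W (\<tau> (fst x) i j) (snd x))
      = (\<lambda>x. (\<Sum>S\<in>Pow {..<2*a}. (-1)^(2*a - card S) * ?Z S (fst x) (snd x) ^ (2*a)) / fact (2*a))"
    by (rule ext) (rule prod_pair_comb_polarization)
  have "integrable (N \<Otimes>\<^sub>M M) (\<lambda>x. ?Z S (fst x) (snd x) ^ (2*a))" if S: "S \<in> Pow {..<2*a}" for S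
  proof (subst integrable_iff_bounded, intro conjI Z_meas)
    let ?C = "((4 * real a)\<^sup>2 * 16) ^ a * normal_even_moment a"
    have fin: "finite (S \<times> {..<2::nat})" using S finite_subset[of S "{..<2*a}"] by auto
    have bound: "(\<integral>\<^sup>+\<omega>. ennreal (?Z S w \<omega> ^ (2*a)) \<partial>M) \<le> ennreal ?C" for w
    proof -
      note moment = is_fBM_lin_comb_moment[OF fbm fin, where d="case_prod c" and t="case_prod (\<tau> w)"]
      have "\<bar>quad_form (fbm_cov H) (S \<times> {..<2}) (case_prod c) (case_prod (\<tau> w))\<bar> \<le> (4 * real a)\<^sup>2 * 16"
        using S c \<tau> H by (intro abs_quad_form_pairs_le abs_fbm_cov_le) auto
      then have "(\<integral>\<omega>. ?Z S w \<omega> ^ (2*a) \<partial>M) \<le> ?C"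
        unfolding moment(3) using moment(1)
        by (intro mult_right_mono power_mono normal_even_moment_nonneg) auto
      moreover have "(\<integral>\<^sup>+\<omega>. ennreal (?Z S w \<omega> ^ (2*a)) \<partial>M) = ennreal (\<integral>\<omega>. ?Z S w \<omega> ^ (2*a) \<partial>M)"
        using moment(2) by (intro nn_integral_eq_integral) (auto simp: power_mult)
      ultimately show ?thesis using ennreal_leI by simp
    qed
    have "(\<integral>\<^sup>+x. ennreal (?Z S (fst x) (snd x) ^ (2*a)) \<partial>(N \<Otimes>\<^sub>M M))
        = (\<integral>\<^sup>+w. (\<integral>\<^sup>+\<omega>. ennreal (?Z S w \<omega> ^ (2*a)) \<partial>M) \<partial>N)"
      using M.nn_integral_fst[symmetric, of "\<lambda>x. ennreal (?Z S (fst x) (snd x) ^ (2*a))" N] Z_meas[of S]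
      by simp
    also have "\<dots> \<le> (\<integral>\<^sup>+w. ennreal ?C \<partial>N)" by (intro nn_integral_mono bound)
    also have "\<dots> < \<infinity>"
      using N.emeasure_finite[of "space N"] by (simp add: ennreal_mult_eq_top_iff less_top[symmetric])
    finally show "(\<integral>\<^sup>+x. ennreal (norm (?Z S (fst x) (snd x) ^ (2*a))) \<partial>(N \<Otimes>\<^sub>M M)) < \<infinity>"
      by (simp add: power_mult)
  qed
  then show ?thesis unfolding prod_eq
    by (intro integrable_divide Bochner_Integration.integrable_sum integrable_mult_right) auto
qed

lemma is_fBM_integral_mixture_prod:
  fixes c :: "nat \<Rightarrow> nat \<Rightarrow> real" and \<tau> :: "'w \<Rightarrow> nat \<Rightarrow> nat \<Rightarrow> real"
  assumes fbm: "is_fBM M H W" and H: "0 \<le> H" "H \<le> 1" and N: "finite_measure N"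
    and \<tau>_meas: "\<And>i j. (\<lambda>w. \<tau> w i j) \<in> borel_measurable N"
    and c: "\<And>i j. \<bar>c i j\<bar> \<le> 1" and \<tau>: "\<And>w i j. \<bar>\<tau> w i j\<bar> \<le> 2"
  shows "integrable M (\<lambda>\<omega>. \<integral>w. (\<Prod>i<2*a. \<Sum>j<2. c i j * W (\<tau> w i j) \<omega>) \<partial>N)"
    and "(\<integral>\<omega>. (\<integral>w. (\<Prod>i<2*a. \<Sum>j<2. c i j * W (\<tau> w i j) \<omega>) \<partial>N) \<partial>M)
       = (\<integral>w. mixed_moment (fbm_cov H) a c (\<tau> w) \<partial>N)"
proof -
  interpret M: prob_space M using fbm unfolding is_fBM_def by blast
  interpret N: finite_measure N by (rule N)
  interpret pair_sigma_finite N M ..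
  let ?f = "\<lambda>w \<omega>. \<Prod>i<2*a. \<Sum>j<2. c i j * W (\<tau> w i j) \<omega>"
  have int: "integrable (N \<Otimes>\<^sub>M M) (case_prod ?f)"
    using is_fBM_integrable_pair_prod[OF assms] by (simp add: case_prod_unfold)
  show "integrable M (\<lambda>\<omega>. \<integral>w. ?f w \<omega> \<partial>N)" by (rule integrable_snd[OF int])
  have "(\<integral>\<omega>. (\<integral>w. ?f w \<omega> \<partial>N) \<partial>M) = (\<integral>w. (\<integral>\<omega>. ?f w \<omega> \<partial>M) \<partial>N)"
    by (rule Fubini_integral[OF int])
  also have "\<dots> = (\<integral>w. mixed_moment (fbm_cov H) a c (\<tau> w) \<partial>N)"
    using is_fBM_integral_prod(2)[OF fbm] by simp
  finally show "(\<integral>\<omega>. (\<integral>w. ?f w \<omega> \<partial>N) \<partial>M) = (\<integral>w. mixed_moment (fbm_cov H) a c (\<tau> w) \<partial>N)" .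
qed

section \<open>The functionals as integrals over unit cubes\<close>

definition unit_cube :: "nat \<Rightarrow> (nat \<Rightarrow> real) set" where
  "unit_cube s = PiE {..<s} (\<lambda>_. {0..1})"

definition cube_measure :: "nat \<Rightarrow> (nat \<Rightarrow> real) measure" where
  "cube_measure s = density (PiM {..<s} (\<lambda>_. lborel)) (\<lambda>u. ennreal (indicator (unit_cube s) u))"

definition clamp01 :: "real \<Rightarrow> real" where
  "clamp01 x = min 1 (max 0 x)"

text \<open>Factor \<open>i\<close> of the integrand of \<open>\<frakW>^{H,r}_{p,l}\<close> is \<open>\<Sum>j<2. incr_coef r j * W (incr_time p l u i j)\<close>:
  the increment \<open>W((l+u\<^sub>i)2^{-p}) - W(l2^{-p})\<close>, or \<open>W((l+u\<^sub>0)2^{-p})\<close> itself when \<open>|r| = 1\<close>.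
  Clamping \<open>u\<^sub>i\<close> to \<open>[0,1]\<close> keeps all times bounded off the cube as well.\<close>
definition incr_time :: "nat \<Rightarrow> int \<Rightarrow> (nat \<Rightarrow> real) \<Rightarrow> nat \<Rightarrow> nat \<Rightarrow> real" where
  "incr_time p l u i j =
     (if j = 0 then (of_int l + clamp01 (u i)) * 2 powr (- real p) else of_int l * 2 powr (- real p))"

definition incr_coef :: "nat list \<Rightarrow> nat \<Rightarrow> real" where
  "incr_coef r j = (if j = 0 then 1 else if sum_list r = 1 then 0 else -1)"

definition factor_index :: "nat list \<Rightarrow> nat list" where
  "factor_index r = concat (map (\<lambda>i. replicate (r ! i) i) [0..<length r])"

definition frakW_integrand :: "(real \<Rightarrow> 'a \<Rightarrow> real) \<Rightarrow> nat list \<Rightarrow> nat \<Rightarrow> int \<Rightarrow> (nat \<Rightarrow> real) \<Rightarrow> 'a \<Rightarrow> real" where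
  "frakW_integrand W r p l u \<omega> =
     (\<Prod>k<sum_list r. \<Sum>j<2. incr_coef r j * W (incr_time p l u (factor_index r ! k) j) \<omega>)"

definition multi_index :: "nat list \<Rightarrow> bool" where
  "multi_index r \<longleftrightarrow> r \<noteq> [] \<and> (\<forall>x\<in>set r. 1 \<le> x)"

lemma length_factor_index: "length (factor_index r) = sum_list r"
proof -
  have "length (factor_index r) = sum_list (map ((!) r) [0..<length r])"
    unfolding factor_index_def by (simp add: length_concat comp_def)
  then show ?thesis by (simp add: map_nth)
qed

lemma factor_index_less:
  assumes "k < sum_list r"
  shows "factor_index r ! k < length r"
proof -
  have "factor_index r ! k \<in> set (factor_index r)" using assms by (simp add: length_factor_index)
  then show ?thesis unfolding factor_index_def by auto
qed

lemma prod_factor_index: "(\<Prod>k<sum_list r. f (factor_index r ! k)) = (\<Prod>i<length r. f i ^ (r ! i))"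
proof -
  have concat: "prod_list (map f (concat xss)) = prod_list (map (\<lambda>xs. prod_list (map f xs)) xss)" for xss
    by (induction xss) auto
  have "(\<Prod>k<sum_list r. f (factor_index r ! k)) = prod_list (map f (factor_index r))"
    by (simp add: prod.list_conv_set_nth length_factor_index atLeast0LessThan)
  also have "\<dots> = prod_list (map (\<lambda>i. f i ^ (r ! i)) [0..<length r])"
    unfolding factor_index_def concat by (simp add: comp_def)
  also have "\<dots> = (\<Prod>i<length r. f i ^ (r ! i))"
    by (simp add: prod.list_conv_set_nth atLeast0LessThan)
  finally show ?thesis .
qed

lemma multi_index_sum_list_eq_1:
  assumes "multi_index r" and "sum_list r = 1"
  shows "r = [1]"
proof -
  obtain x xs where r: "r = x # xs" and pos: "1 \<le> x" "\<forall>y\<in>set xs. 1 \<le> y"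
    using assms(1) unfolding multi_index_def by (cases r) auto
  moreover have "x + sum_list xs = 1" using assms(2) r by simp
  ultimately have "x = 1" "sum_list xs = 0" by linarith+
  moreover have "xs = []" if "sum_list xs = 0"
    using that pos(2) by (cases xs) auto
  ultimately show ?thesis using r by simp
qed

lemma prob_space_cube_measure: "prob_space (cube_measure s)"
proof
  interpret product_sigma_finite "\<lambda>_::nat. lborel" ..
  have cube: "unit_cube s \<in> sets (PiM {..<s} (\<lambda>_. lborel))"
    unfolding unit_cube_def by (rule sets_PiM_I_finite) auto
  have "emeasure (cube_measure s) (space (cube_measure s)) = emeasure (PiM {..<s} (\<lambda>_. lborel)) (unit_cube s)"
    unfolding cube_measure_def using cube by (simp add: emeasure_density ennreal_indicator nn_integral_indicator)
  also have "\<dots> = (\<Prod>i<s. emeasure lborel {0..1::real})"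
    unfolding unit_cube_def by (subst emeasure_PiM) auto
  finally show "emeasure (cube_measure s) (space (cube_measure s)) = 1" by simp
qed

lemma incr_time_measurable: "i < s \<Longrightarrow> (\<lambda>u. incr_time p l u i j) \<in> borel_measurable (PiM {..<s} (\<lambda>_. lborel))"
  unfolding incr_time_def clamp01_def by measurable

lemma frakW_integrand_measurable:
  assumes "continuous_on UNIV (\<lambda>t. W t \<omega>)"
  shows "(\<lambda>u. frakW_integrand W r p l u \<omega>) \<in> borel_measurable (PiM {..<length r} (\<lambda>_. lborel))"
proof -
  have W: "(\<lambda>t. W t \<omega>) \<in> borel_measurable borel"
    using assms by (intro borel_measurable_continuous_onI)
  have "(\<lambda>u. W (incr_time p l u (factor_index r ! k) j) \<omega>) \<in> borel_measurable (PiM {..<length r} (\<lambda>_. lborel))"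
    if "k < sum_list r" for k j
    using measurable_compose[OF incr_time_measurable[OF factor_index_less[OF that]] W] by simp
  then show ?thesis unfolding frakW_integrand_def
    by (intro borel_measurable_prod borel_measurable_sum borel_measurable_times borel_measurable_const) auto
qed

lemma frakW_integrand_eq_increments:
  assumes "sum_list r \<noteq> 1" and "u \<in> unit_cube (length r)"
  shows "frakW_integrand W r p l u \<omega> =
    (\<Prod>i<length r. (W ((of_int l + u i) * 2 powr (- real p)) \<omega> - W (of_int l * 2 powr (- real p)) \<omega>) ^ (r ! i))"
proof -
  have "(\<Sum>j<2. incr_coef r j * W (incr_time p l u i j) \<omega>)
      = W ((of_int l + u i) * 2 powr (- real p)) \<omega> - W (of_int l * 2 powr (- real p)) \<omega>" if "i < length r" for i
  proof -
    have "u i \<in> {0..1}" using assms(2) that unfolding unit_cube_def by blast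
    then show ?thesis using assms(1) by (simp add: numeral_2_eq_2 incr_coef_def incr_time_def clamp01_def)
  qed
  moreover have "frakW_integrand W r p l u \<omega> = (\<Prod>i<length r. (\<Sum>j<2. incr_coef r j * W (incr_time p l u i j) \<omega>) ^ (r ! i))"
    unfolding frakW_integrand_def by (rule prod_factor_index)
  ultimately show ?thesis by simp
qed

lemma integral_cube_measure:
  fixes f :: "(nat \<Rightarrow> real) \<Rightarrow> real"
  assumes "f \<in> borel_measurable (PiM {..<s} (\<lambda>_. lborel))"
  shows "(\<integral>u. f u \<partial>cube_measure s) = (\<integral>u. indicator (unit_cube s) u * f u \<partial>PiM {..<s} (\<lambda>_. lborel))"
  unfolding cube_measure_def unit_cube_def using assms
  by (subst integral_density) (auto intro: sets_PiM_I_finite)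

lemma frakW_single_eq_integral:
  assumes cont: "continuous_on UNIV (\<lambda>t. W t \<omega>)"
  shows "frakW W p l [1] \<omega> = (\<integral>u. frakW_integrand W [1] p l u \<omega> \<partial>cube_measure 1)"
proof -
  interpret product_sigma_finite "\<lambda>_::nat. lborel" ..
  let ?f = "\<lambda>x. indicator {0..1} x * W ((of_int l + clamp01 x) * 2 powr (- real p)) \<omega>"
  have W: "(\<lambda>t. W t \<omega>) \<in> borel_measurable borel"
    using cont by (intro borel_measurable_continuous_onI)
  have f_meas: "?f \<in> borel_measurable lborel"
    using measurable_compose[of "\<lambda>x. (of_int l + clamp01 x) * 2 powr (- real p)" lborel borel, OF _ W]
    unfolding clamp01_def by measurable
  have "(\<integral>u. frakW_integrand W [1] p l u \<omega> \<partial>cube_measure 1)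
      = (\<integral>u. indicator (unit_cube 1) u * frakW_integrand W [1] p l u \<omega> \<partial>PiM {..<1} (\<lambda>_. lborel))"
    using integral_cube_measure[OF frakW_integrand_measurable[where W=W and \<omega>=\<omega> and r="[1]", OF cont]] by simp
  also have "\<dots> = (\<integral>u. ?f (u 0) \<partial>PiM {0::nat} (\<lambda>_. lborel))"
  proof (rule Bochner_Integration.integral_cong)
    show "PiM {..<1} (\<lambda>_. lborel) = PiM {0::nat} (\<lambda>_. lborel :: real measure)" by (simp add: lessThan_Suc)
    fix u :: "nat \<Rightarrow> real" assume "u \<in> space (PiM {0::nat} (\<lambda>_. lborel))"
    then have "indicator (unit_cube 1) u = (indicator {0..1} (u 0) :: real)"
      by (auto simp: unit_cube_def space_PiM indicator_def PiE_def extensional_def lessThan_Suc)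
    moreover have "frakW_integrand W [1] p l u \<omega> = W ((of_int l + clamp01 (u 0)) * 2 powr (- real p)) \<omega>"
      by (simp add: frakW_integrand_def numeral_2_eq_2 incr_coef_def incr_time_def factor_index_def)
    ultimately show "indicator (unit_cube 1) u * frakW_integrand W [1] p l u \<omega> = ?f (u 0)"
      by simp
  qed
  also have "\<dots> = (\<integral>x. ?f x \<partial>lborel)"
    by (rule product_integral_singleton[OF f_meas])
  also have "\<dots> = set_lebesgue_integral lborel {0..1} (\<lambda>x. W ((of_int l + x) * 2 powr (- real p)) \<omega>)"
    unfolding set_lebesgue_integral_def
    by (intro Bochner_Integration.integral_cong) (auto simp: indicator_def clamp01_def)
  finally show ?thesis unfolding frakW_def by simp
qed

lemma frakW_eq_integral:
  assumes cont: "continuous_on UNIV (\<lambda>t. W t \<omega>)" and r: "multi_index r"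
  shows "frakW W p l r \<omega> = (1 / real (prod_list (map fact r))) * (\<integral>u. frakW_integrand W r p l u \<omega> \<partial>cube_measure (length r))"
proof (cases "sum_list r = 1")
  case False
  let ?s = "length r"
  let ?g = "\<lambda>u. \<Prod>i<?s. (W ((of_int l + u i) * 2 powr (- real p)) \<omega> - W (of_int l * 2 powr (- real p)) \<omega>) ^ (r ! i)"
  have eq: "indicator (unit_cube ?s) u * frakW_integrand W r p l u \<omega> = indicator (unit_cube ?s) u * ?g u" for u
    using frakW_integrand_eq_increments[OF False] by (cases "u \<in> unit_cube ?s") auto
  have "(\<integral>u. indicator (unit_cube ?s) u * ?g u \<partial>PiM {..<?s} (\<lambda>_. lborel))
      = (\<integral>u. frakW_integrand W r p l u \<omega> \<partial>cube_measure ?s)"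
    unfolding integral_cube_measure[OF frakW_integrand_measurable[where W=W and \<omega>=\<omega>, OF cont]]
    by (rule Bochner_Integration.integral_cong[OF refl]) (rule eq[symmetric])
  moreover have "frakW W p l r \<omega> = (1 / real (prod_list (map fact r))) *
      (\<integral>u. indicator (unit_cube ?s) u * ?g u \<partial>PiM {..<?s} (\<lambda>_. lborel))"
    unfolding frakW_def using False by (simp add: set_lebesgue_integral_def unit_cube_def)
  ultimately show ?thesis by simp
next
  case True
  then show ?thesis using multi_index_sum_list_eq_1[OF r] frakW_single_eq_integral[where W=W and \<omega>=\<omega>, OF cont] by simp
qed

section \<open>Expectations of products of two functionals\<close>

text \<open>For these translates \<open>l\<close> all times \<open>(l + u) 2^{-p}\<close> with \<open>0 \<le> u \<le> 1\<close> lie in \<open>[-2, 2]\<close>.\<close>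
definition in_window :: "nat \<Rightarrow> int \<Rightarrow> bool" where
  "in_window p l \<longleftrightarrow> - (2^p - 1) \<le> l \<and> l \<le> 2^(p+1) - 1"

lemma abs_incr_time_le:
  assumes "in_window p l"
  shows "\<bar>incr_time p l u i j\<bar> \<le> 2"
proof -
  define h where "h = (2::real) powr (- real p)"
  have h: "0 < h" "h * 2^p = 1" unfolding h_def by (simp_all add: powr_minus powr_realpow field_simps)
  have l: "- (2^p - 1) \<le> real_of_int l" "real_of_int l \<le> 2 * 2^p - 1"
    using assms unfolding in_window_def by (simp_all add: of_int_le_iff[symmetric, where 'a=real])
  have c: "0 \<le> clamp01 (u i)" "clamp01 (u i) \<le> 1" unfolding clamp01_def by auto
  have bound: "\<bar>y * h\<bar> \<le> 2" if "\<bar>y\<bar> \<le> 2 * 2^p" for y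
  proof -
    have "\<bar>y * h\<bar> = \<bar>y\<bar> * h" using h by (simp add: abs_mult)
    also have "\<dots> \<le> 2 * 2^p * h" using that h by (intro mult_right_mono) auto
    also have "\<dots> = 2 * (h * 2^p)" by (simp only: ac_simps)
    finally show ?thesis using h by simp
  qed
  show ?thesis unfolding incr_time_def h_def[symmetric]
    using bound[of "real_of_int l + clamp01 (u i)"] bound[of "real_of_int l"] l c by auto
qed

text \<open>The product of the integrands of two functionals, written as one product of \<open>|r\<^sub>A| + |r\<^sub>B|\<close>
  factors over the product of the two cubes.\<close>
definition pair_coef :: "nat list \<Rightarrow> nat list \<Rightarrow> nat \<Rightarrow> nat \<Rightarrow> real" where
  "pair_coef rA rB k j = (if k < sum_list rA then incr_coef rA j else incr_coef rB j)"

definition pair_time ::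
    "nat \<Rightarrow> int \<Rightarrow> nat list \<Rightarrow> int \<Rightarrow> nat list \<Rightarrow> (nat \<Rightarrow> real) \<times> (nat \<Rightarrow> real) \<Rightarrow> nat \<Rightarrow> nat \<Rightarrow> real" where
  "pair_time p lA rA lB rB w k j =
     (if k < sum_list rA then incr_time p lA (fst w) (factor_index rA ! k) j
      else if k < sum_list rA + sum_list rB then incr_time p lB (snd w) (factor_index rB ! (k - sum_list rA)) j
      else 0)"

definition cube_pair_measure :: "nat list \<Rightarrow> nat list \<Rightarrow> ((nat \<Rightarrow> real) \<times> (nat \<Rightarrow> real)) measure" where
  "cube_pair_measure rA rB = cube_measure (length rA) \<Otimes>\<^sub>M cube_measure (length rB)"

definition fact_weight :: "nat list \<Rightarrow> real" where
  "fact_weight r = 1 / real (prod_list (map fact r))"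

lemma abs_pair_coef_le: "\<bar>pair_coef rA rB k j\<bar> \<le> 1"
  by (simp add: pair_coef_def incr_coef_def)

lemma abs_pair_time_le: "in_window p lA \<Longrightarrow> in_window p lB \<Longrightarrow> \<bar>pair_time p lA rA lB rB w k j\<bar> \<le> 2"
  unfolding pair_time_def using abs_incr_time_le by auto

lemma abs_fact_weight_le: "\<bar>fact_weight r\<bar> \<le> 1"
proof -
  have "prod_list (map fact r) \<noteq> (0::nat)" by (auto simp: prod_list_zero_iff)
  then show ?thesis unfolding fact_weight_def by simp
qed

lemma prob_space_cube_pair_measure: "prob_space (cube_pair_measure rA rB)"
  unfolding cube_pair_measure_def by (intro prob_space_pair prob_space_cube_measure)

lemma pair_time_measurable: "(\<lambda>w. pair_time p lA rA lB rB w k j) \<in> borel_measurable (cube_pair_measure rA rB)"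
proof -
  have incr: "(\<lambda>u. incr_time p l u (factor_index r ! k') j) \<in> borel_measurable (cube_measure (length r))"
    if "k' < sum_list r" for l r k'
    unfolding cube_measure_def using incr_time_measurable[OF factor_index_less[OF that]] by simp
  consider "k < sum_list rA" | "\<not> k < sum_list rA" "k < sum_list rA + sum_list rB"
    | "\<not> k < sum_list rA + sum_list rB" by linarith
  then show ?thesis
  proof cases
    case 1
    have "(\<lambda>w. incr_time p lA (fst w) (factor_index rA ! k) j) \<in> borel_measurable (cube_pair_measure rA rB)"
      using incr[OF 1] unfolding cube_pair_measure_def by measurable
    then show ?thesis using 1 unfolding pair_time_def by simp
  next
    case 2
    then have "k - sum_list rA < sum_list rB" by linarith
    then have "(\<lambda>w. incr_time p lB (snd w) (factor_index rB ! (k - sum_list rA)) j)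
        \<in> borel_measurable (cube_pair_measure rA rB)"
      using incr unfolding cube_pair_measure_def by measurable
    then show ?thesis using 2 unfolding pair_time_def by simp
  qed (simp add: pair_time_def)
qed

lemma frakW_integrand_mult_eq:
  assumes "sum_list rA + sum_list rB = 2*a"
  shows "frakW_integrand W rA p lA (fst w) \<omega> * frakW_integrand W rB p lB (snd w) \<omega>
     = (\<Prod>k<2*a. \<Sum>j<2. pair_coef rA rB k j * W (pair_time p lA rA lB rB w k j) \<omega>)"
proof -
  let ?f = "\<lambda>k. \<Sum>j<2. pair_coef rA rB k j * W (pair_time p lA rA lB rB w k j) \<omega>"
  have split: "(\<Prod>k<m + n. g k) = (\<Prod>k<m. g k) * (\<Prod>k<n. g (m + k))" for m n :: nat and g :: "nat \<Rightarrow> real"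
    by (induction n) (auto simp: algebra_simps)
  have "(\<Prod>k<2*a. ?f k) = (\<Prod>k<sum_list rA. ?f k) * (\<Prod>k<sum_list rB. ?f (sum_list rA + k))"
    unfolding assms[symmetric] by (rule split)
  also have "(\<Prod>k<sum_list rA. ?f k) = frakW_integrand W rA p lA (fst w) \<omega>"
    unfolding frakW_integrand_def by (intro prod.cong refl) (simp add: pair_coef_def pair_time_def)
  also have "(\<Prod>k<sum_list rB. ?f (sum_list rA + k)) = frakW_integrand W rB p lB (snd w) \<omega>"
    unfolding frakW_integrand_def by (intro prod.cong refl) (simp add: pair_coef_def pair_time_def)
  finally show ?thesis by simp
qed

lemma abs_frakW_integrand_le:
  assumes "\<And>t. \<bar>t\<bar> \<le> 2 \<Longrightarrow> \<bar>W t \<omega>\<bar> \<le> B" and "in_window p l"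
  shows "\<bar>frakW_integrand W r p l u \<omega>\<bar> \<le> (2 * B) ^ sum_list r"
proof -
  have "\<bar>\<Sum>j<2. incr_coef r j * W (incr_time p l u i j) \<omega>\<bar> \<le> 2 * B" for i
  proof -
    have "\<bar>incr_coef r j * W (incr_time p l u i j) \<omega>\<bar> \<le> B" for j
    proof -
      have "\<bar>incr_coef r j\<bar> * \<bar>W (incr_time p l u i j) \<omega>\<bar> \<le> 1 * B"
        using assms abs_incr_time_le[OF assms(2)] by (intro mult_mono) (auto simp: incr_coef_def)
      then show ?thesis by (simp add: abs_mult)
    qed
    then show ?thesis using abs_sum_le_card_mult[of "{..<2::nat}"] by simp
  qed
  then have "(\<Prod>k<sum_list r. \<bar>\<Sum>j<2. incr_coef r j * W (incr_time p l u (factor_index r ! k) j) \<omega>\<bar>)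
      \<le> (\<Prod>k<sum_list r. 2 * B)"
    by (intro prod_mono) auto
  then show ?thesis unfolding frakW_integrand_def abs_prod by simp
qed

lemma integral_mult_pair_measure:
  fixes f :: "'u \<Rightarrow> real" and g :: "'v \<Rightarrow> real"
  assumes "prob_space M1" and "prob_space M2"
    and [measurable]: "f \<in> borel_measurable M1" "g \<in> borel_measurable M2"
    and f: "\<And>x. x \<in> space M1 \<Longrightarrow> \<bar>f x\<bar> \<le> B1" and g: "\<And>y. y \<in> space M2 \<Longrightarrow> \<bar>g y\<bar> \<le> B2"
  shows "(\<integral>x. f x \<partial>M1) * (\<integral>y. g y \<partial>M2) = (\<integral>z. f (fst z) * g (snd z) \<partial>(M1 \<Otimes>\<^sub>M M2))"
proof -
  interpret M1: prob_space M1 by fact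
  interpret M2: prob_space M2 by fact
  interpret pair_prob_space M1 M2 ..
  have "integrable (M1 \<Otimes>\<^sub>M M2) (\<lambda>z. f (fst z) * g (snd z))"
  proof (rule integrable_const_bound[where B="B1 * B2"])
    show "AE z in M1 \<Otimes>\<^sub>M M2. norm (f (fst z) * g (snd z)) \<le> B1 * B2"
    proof (rule AE_I2)
      fix z assume "z \<in> space (M1 \<Otimes>\<^sub>M M2)"
      then have "\<bar>f (fst z)\<bar> \<le> B1" "\<bar>g (snd z)\<bar> \<le> B2" using f g by (auto simp: space_pair_measure)
      then show "norm (f (fst z) * g (snd z)) \<le> B1 * B2"
        by (auto simp: abs_mult intro!: mult_mono order_trans[OF abs_ge_zero])
    qed
  qed measurable
  then show ?thesis using integral_fst'[of "\<lambda>z. f (fst z) * g (snd z)"] by simp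
qed

definition frakW_moment :: "nat \<Rightarrow> nat \<Rightarrow> real \<Rightarrow> int \<Rightarrow> nat list \<Rightarrow> int \<Rightarrow> nat list \<Rightarrow> real" where
  "frakW_moment p a H lA rA lB rB = fact_weight rA * fact_weight rB *
     (\<integral>w. mixed_moment (fbm_cov H) a (pair_coef rA rB) (pair_time p lA rA lB rB w) \<partial>cube_pair_measure rA rB)"

definition frakW_moment_deriv :: "nat \<Rightarrow> nat \<Rightarrow> real \<Rightarrow> int \<Rightarrow> nat list \<Rightarrow> int \<Rightarrow> nat list \<Rightarrow> real" where
  "frakW_moment_deriv p a H lA rA lB rB = fact_weight rA * fact_weight rB *
     (\<integral>w. mixed_moment_deriv (fbm_cov H) (fbm_cov_deriv H) a (pair_coef rA rB) (pair_time p lA rA lB rB w)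
        \<partial>cube_pair_measure rA rB)"

lemma frakW_mult_eq_integral:
  assumes cont: "continuous_on UNIV (\<lambda>t. W t \<omega>)"
    and rA: "multi_index rA" and rB: "multi_index rB" and sum: "sum_list rA + sum_list rB = 2*a"
    and lA: "in_window p lA" and lB: "in_window p lB"
  shows "frakW W p lA rA \<omega> * frakW W p lB rB \<omega> = fact_weight rA * fact_weight rB *
      (\<integral>w. (\<Prod>k<2*a. \<Sum>j<2. pair_coef rA rB k j * W (pair_time p lA rA lB rB w k j) \<omega>) \<partial>cube_pair_measure rA rB)"
proof -
  have "compact ((\<lambda>t. W t \<omega>) ` {-2..2})"
    by (rule compact_continuous_image[OF continuous_on_subset[OF cont] compact_Icc]) simp
  then obtain B where "\<forall>x\<in>(\<lambda>t. W t \<omega>) ` {-2..2}. norm x \<le> B"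
    using compact_imp_bounded bounded_iff by metis
  then have B: "\<And>t. \<bar>t\<bar> \<le> 2 \<Longrightarrow> \<bar>W t \<omega>\<bar> \<le> B" by (auto simp: abs_le_iff)
  have meas: "(\<lambda>u. frakW_integrand W r p l u \<omega>) \<in> borel_measurable (cube_measure (length r))" for r l
    using frakW_integrand_measurable[where W=W and \<omega>=\<omega>, OF cont] by (simp add: cube_measure_def)
  have "(\<integral>u. frakW_integrand W rA p lA u \<omega> \<partial>cube_measure (length rA)) *
        (\<integral>u. frakW_integrand W rB p lB u \<omega> \<partial>cube_measure (length rB))
      = (\<integral>w. frakW_integrand W rA p lA (fst w) \<omega> * frakW_integrand W rB p lB (snd w) \<omega> \<partial>cube_pair_measure rA rB)"
    unfolding cube_pair_measure_def
    by (rule integral_mult_pair_measure[OF prob_space_cube_measure prob_space_cube_measure meas meas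
          abs_frakW_integrand_le[where W=W and \<omega>=\<omega>, OF B lA] abs_frakW_integrand_le[where W=W and \<omega>=\<omega>, OF B lB]])
  also have "\<dots> = (\<integral>w. (\<Prod>k<2*a. \<Sum>j<2. pair_coef rA rB k j * W (pair_time p lA rA lB rB w k j) \<omega>)
      \<partial>cube_pair_measure rA rB)"
    by (intro Bochner_Integration.integral_cong refl frakW_integrand_mult_eq[OF sum])
  finally show ?thesis
    unfolding frakW_eq_integral[where W=W and \<omega>=\<omega>, OF cont rA] frakW_eq_integral[where W=W and \<omega>=\<omega>, OF cont rB]
      fact_weight_def
    by simp
qed

lemma is_fBM_integral_frakW_mult:
  assumes fbm: "is_fBM M H W" and H: "0 \<le> H" "H \<le> 1"
    and rA: "multi_index rA" and rB: "multi_index rB" and sum: "sum_list rA + sum_list rB = 2*a"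
    and lA: "in_window p lA" and lB: "in_window p lB"
  shows "integrable M (\<lambda>\<omega>. frakW W p lA rA \<omega> * frakW W p lB rB \<omega>)"
    and "(\<integral>\<omega>. frakW W p lA rA \<omega> * frakW W p lB rB \<omega> \<partial>M) = frakW_moment p a H lA rA lB rB"
proof -
  let ?N = "cube_pair_measure rA rB"
  let ?f = "\<lambda>w \<omega>. \<Prod>k<2*a. \<Sum>j<2. pair_coef rA rB k j * W (pair_time p lA rA lB rB w k j) \<omega>"
  have frakW_mult: "frakW W p lA rA \<omega> * frakW W p lB rB \<omega> = fact_weight rA * fact_weight rB * (\<integral>w. ?f w \<omega> \<partial>?N)"
    if "\<omega> \<in> space M" for \<omega>
    using that fbm unfolding is_fBM_def by (intro frakW_mult_eq_integral rA rB sum lA lB) auto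
  have N: "finite_measure ?N"
    using prob_space_cube_pair_measure[of rA rB] by (simp add: prob_space_def)
  note mixture = is_fBM_integral_mixture_prod[OF fbm H N pair_time_measurable abs_pair_coef_le abs_pair_time_le[OF lA lB]]
  have "integrable M (\<lambda>\<omega>. frakW W p lA rA \<omega> * frakW W p lB rB \<omega>)
      \<longleftrightarrow> integrable M (\<lambda>\<omega>. fact_weight rA * fact_weight rB * (\<integral>w. ?f w \<omega> \<partial>?N))"
    by (rule Bochner_Integration.integrable_cong[OF refl]) (rule frakW_mult)
  then show "integrable M (\<lambda>\<omega>. frakW W p lA rA \<omega> * frakW W p lB rB \<omega>)"
    using mixture(1) by simp
  have "(\<integral>\<omega>. frakW W p lA rA \<omega> * frakW W p lB rB \<omega> \<partial>M)
      = (\<integral>\<omega>. fact_weight rA * fact_weight rB * (\<integral>w. ?f w \<omega> \<partial>?N) \<partial>M)"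
    using frakW_mult by (intro Bochner_Integration.integral_cong) auto
  also have "\<dots> = frakW_moment p a H lA rA lB rB"
    unfolding frakW_moment_def mixture(2)[symmetric] by simp
  finally show "(\<integral>\<omega>. frakW W p lA rA \<omega> * frakW W p lB rB \<omega> \<partial>M) = frakW_moment p a H lA rA lB rB" .
qed

section \<open>Differentiation in the Hurst index\<close>

lemma has_real_derivative_lebesgue_integral:
  fixes \<Phi> \<Phi>' :: "real \<Rightarrow> 'b \<Rightarrow> real" and S :: "real set"
  assumes "finite_measure N" and "convex S" and H: "H \<in> S"
    and meas: "\<And>H. H \<in> S \<Longrightarrow> \<Phi> H \<in> borel_measurable N"
    and meas': "\<And>H. H \<in> S \<Longrightarrow> \<Phi>' H \<in> borel_measurable N"
    and int: "\<And>H. H \<in> S \<Longrightarrow> integrable N (\<Phi> H)"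
    and deriv: "\<And>H x. H \<in> S \<Longrightarrow> x \<in> space N \<Longrightarrow> ((\<lambda>H. \<Phi> H x) has_real_derivative \<Phi>' H x) (at H within S)"
    and bound: "\<And>H x. H \<in> S \<Longrightarrow> x \<in> space N \<Longrightarrow> \<bar>\<Phi>' H x\<bar> \<le> K"
  shows "((\<lambda>H. \<integral>x. \<Phi> H x \<partial>N) has_real_derivative (\<integral>x. \<Phi>' H x \<partial>N)) (at H within S)"
  unfolding has_field_derivative_iff tendsto_at_iff_sequentially
proof (intro allI impI)
  interpret finite_measure N by fact
  fix X :: "nat \<Rightarrow> real" assume X: "\<forall>i. X i \<in> S - {H}" and "X \<longlonglongrightarrow> H"
  let ?q = "\<lambda>i x. (\<Phi> (X i) x - \<Phi> H x) / (X i - H)"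
  have lim: "(\<lambda>i. \<integral>x. ?q i x \<partial>N) \<longlonglongrightarrow> (\<integral>x. \<Phi>' H x \<partial>N)"
  proof (rule integral_dominated_convergence[where w="\<lambda>_. K"])
    show "?q i \<in> borel_measurable N" for i
    proof -
      have "X i \<in> S" using X by auto
      with meas[OF H] meas[OF this] show ?thesis by measurable
    qed
    show "AE x in N. (\<lambda>i. ?q i x) \<longlonglongrightarrow> \<Phi>' H x"
    proof (rule AE_I2)
      fix x assume "x \<in> space N"
      then have "((\<lambda>y. (\<Phi> y x - \<Phi> H x) / (y - H)) \<longlongrightarrow> \<Phi>' H x) (at H within S)"
        using deriv[OF H] unfolding has_field_derivative_iff by blast
      then show "(\<lambda>i. ?q i x) \<longlonglongrightarrow> \<Phi>' H x"
        unfolding tendsto_at_iff_sequentially comp_def using X \<open>X \<longlonglongrightarrow> H\<close> by blast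
    qed
    show "AE x in N. norm (?q i x) \<le> K" for i
    proof (rule AE_I2)
      fix x assume x: "x \<in> space N"
      have "\<bar>\<Phi> (X i) x - \<Phi> H x\<bar> \<le> K * \<bar>X i - H\<bar>"
        using field_differentiable_bound[OF \<open>convex S\<close>, of "\<lambda>H. \<Phi> H x" "\<lambda>H. \<Phi>' H x" K] deriv[OF _ x] bound[OF _ x] X H
        by auto
      moreover have "\<bar>X i - H\<bar> > 0" using X by auto
      ultimately show "norm (?q i x) \<le> K" by (simp add: abs_divide divide_le_eq)
    qed
  qed (use meas'[OF H] in auto)
  have quotient: "(\<integral>x. ?q i x \<partial>N) = ((\<integral>x. \<Phi> (X i) x \<partial>N) - (\<integral>x. \<Phi> H x \<partial>N)) / (X i - H)" for i
  proof -
    have "X i \<in> S" "X i \<noteq> H" using X by auto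
    then show ?thesis using Bochner_Integration.integral_diff[OF int[of "X i"] int[OF H]] by simp
  qed
  show "((\<lambda>y. ((\<integral>x. \<Phi> y x \<partial>N) - (\<integral>x. \<Phi> H x \<partial>N)) / (y - H)) \<circ> X) \<longlonglongrightarrow> (\<integral>x. \<Phi>' H x \<partial>N)"
    using lim unfolding quotient comp_def .
qed

lemma measurable_mixed_moment:
  assumes "\<And>i j. (\<lambda>w. \<tau> w i j) \<in> borel_measurable N"
  shows "(\<lambda>w. mixed_moment (fbm_cov H) a c (\<tau> w)) \<in> borel_measurable N"
    and "(\<lambda>w. mixed_moment_deriv (fbm_cov H) (fbm_cov_deriv H) a c (\<tau> w)) \<in> borel_measurable N"
proof -
  have [measurable]: "(\<lambda>w. case_prod (\<tau> w) k) \<in> borel_measurable N" for k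
    using assms[of "fst k" "snd k"] by (simp add: split_beta)
  have [measurable]: "(\<lambda>w. quad_form (fbm_cov H) K d (case_prod (\<tau> w))) \<in> borel_measurable N"
    "(\<lambda>w. quad_form (fbm_cov_deriv H) K d (case_prod (\<tau> w))) \<in> borel_measurable N" for K d
    unfolding quad_form_def fbm_cov_def fbm_cov_deriv_def by measurable
  show "(\<lambda>w. mixed_moment (fbm_cov H) a c (\<tau> w)) \<in> borel_measurable N"
    and "(\<lambda>w. mixed_moment_deriv (fbm_cov H) (fbm_cov_deriv H) a c (\<tau> w)) \<in> borel_measurable N"
    unfolding mixed_moment_def mixed_moment_deriv_def by measurable
qed

lemma abs_frakW_moment_integrands_le:
  assumes "in_window p lA" "in_window p lB" "0 < Hm" "Hm \<le> H" "H \<le> 1"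
  shows "\<bar>mixed_moment (fbm_cov H) a (pair_coef rA rB) (pair_time p lA rA lB rB w)\<bar> \<le> mixed_moment_bound a 16"
    and "\<bar>mixed_moment_deriv (fbm_cov H) (fbm_cov_deriv H) a (pair_coef rA rB) (pair_time p lA rA lB rB w)\<bar>
         \<le> mixed_moment_deriv_bound a 16 (3 * (1 / (2*Hm) + 48))"
  using assms
  by (intro abs_mixed_moment_le abs_mixed_moment_deriv_le abs_pair_coef_le abs_fbm_cov_le abs_fbm_cov_deriv_le
      abs_pair_time_le; simp)+

lemma frakW_moment_has_derivative:
  assumes Hm: "0 < Hm" and Hp: "Hp \<le> 1" and H: "H \<in> {Hm..Hp}" and lA: "in_window p lA" and lB: "in_window p lB"
  shows "((\<lambda>H. frakW_moment p a H lA rA lB rB) has_real_derivative frakW_moment_deriv p a H lA rA lB rB)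
           (at H within {Hm..Hp})"
proof -
  let ?N = "cube_pair_measure rA rB"
  let ?\<Phi> = "\<lambda>H w. mixed_moment (fbm_cov H) a (pair_coef rA rB) (pair_time p lA rA lB rB w)"
  let ?\<Phi>' = "\<lambda>H w. mixed_moment_deriv (fbm_cov H) (fbm_cov_deriv H) a (pair_coef rA rB) (pair_time p lA rA lB rB w)"
  interpret N: prob_space ?N by (rule prob_space_cube_pair_measure)
  note bounds = abs_frakW_moment_integrands_le[OF lA lB Hm]
  note meas = measurable_mixed_moment[where \<tau>="pair_time p lA rA lB rB", OF pair_time_measurable]
  have "((\<lambda>H. \<integral>w. ?\<Phi> H w \<partial>?N) has_real_derivative (\<integral>w. ?\<Phi>' H w \<partial>?N)) (at H within {Hm..Hp})"
  proof (rule has_real_derivative_lebesgue_integral[OF N.finite_measure_axioms convex_real_interval(5) H])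
    show "integrable ?N (?\<Phi> H')" if "H' \<in> {Hm..Hp}" for H'
      using that Hp bounds(1) by (intro N.integrable_const_bound[where B="mixed_moment_bound a 16"] AE_I2 meas) auto
    show "\<bar>?\<Phi>' H' w\<bar> \<le> mixed_moment_deriv_bound a 16 (3 * (1 / (2*Hm) + 48))" if "H' \<in> {Hm..Hp}" for H' w
      using that Hp by (intro bounds(2)) auto
    show "((\<lambda>H. ?\<Phi> H w) has_real_derivative ?\<Phi>' H' w) (at H' within {Hm..Hp})" for H' w
      by (intro mixed_moment_has_derivative fbm_cov_has_derivative)
  qed (rule meas)+
  then show ?thesis unfolding frakW_moment_def[abs_def] frakW_moment_deriv_def by (rule DERIV_cmult)
qed

lemma abs_frakW_moment_deriv_le:
  assumes "in_window p lA" "in_window p lB" "0 < Hm" "Hm \<le> H" "H \<le> 1"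
  shows "\<bar>frakW_moment_deriv p a H lA rA lB rB\<bar> \<le> mixed_moment_deriv_bound a 16 (3 * (1 / (2*Hm) + 48))"
proof -
  let ?N = "cube_pair_measure rA rB"
  let ?C = "mixed_moment_deriv_bound a 16 (3 * (1 / (2*Hm) + 48))"
  interpret N: prob_space ?N by (rule prob_space_cube_pair_measure)
  let ?f = "\<lambda>w. mixed_moment_deriv (fbm_cov H) (fbm_cov_deriv H) a (pair_coef rA rB) (pair_time p lA rA lB rB w)"
  have bound: "\<bar>?f w\<bar> \<le> ?C" for w by (rule abs_frakW_moment_integrands_le(2)[OF assms])
  have "?f \<in> borel_measurable ?N"
    by (rule measurable_mixed_moment(2)[where \<tau>="pair_time p lA rA lB rB", OF pair_time_measurable])
  then have "integrable ?N ?f" using bound by (intro N.integrable_const_bound[where B="?C"] AE_I2) auto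
  then have "\<bar>\<integral>w. ?f w \<partial>?N\<bar> \<le> ?C"
    using bound by (intro order_trans[OF integral_abs_bound] N.integral_le_const AE_I2) auto
  moreover have "\<bar>fact_weight rA * fact_weight rB\<bar> \<le> 1"
    using abs_fact_weight_le[of rA] abs_fact_weight_le[of rB] by (simp add: abs_mult mult_le_one)
  ultimately have "\<bar>fact_weight rA * fact_weight rB\<bar> * \<bar>\<integral>w. ?f w \<partial>?N\<bar> \<le> 1 * ?C"
    by (intro mult_mono) auto
  then show ?thesis unfolding frakW_moment_deriv_def by (simp add: abs_mult)
qed

section \<open>The functions \<open>\<kappa>\<^sub>p\<^sub>,\<^sub>a\<close>\<close>

text \<open>\<open>\<kappa>_{p,a}\<close> with each expectation \<open>E[\<frakW>^{r_A}_{p,l_A} \<frakW>^{r_B}_{p,l_B}]\<close> replaced by \<open>F l_A r_A l_B r_B\<close>.\<close>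
definition kappa_sum :: "nat \<Rightarrow> nat \<Rightarrow> (int \<Rightarrow> nat list \<Rightarrow> int \<Rightarrow> nat list \<Rightarrow> real) \<Rightarrow> real" where
  "kappa_sum p a F = 2 powr (- 2 * real p) *
    (\<Sum>l\<in>{- (2^p - 1) .. 2^p - 1 :: int}. (2^p - \<bar>of_int l\<bar>) *
      (\<Sum>(r1, r2)\<in>kappa_idx a. (-1) ^ (length r1 + length r2) / (real (length r1) * real (length r2)) *
         (F (2^p) r1 (2^p + l) r2 - F (2^p) r1 l r2 - F 0 r1 (2^p + l) r2 + F 0 r1 l r2)))"

lemma in_window_kappa_translates:
  assumes "l \<in> {- (2^p - 1) .. 2^p - 1 :: int}"
  shows "in_window p (2^p)" "in_window p 0" "in_window p (2^p + l)" "in_window p l"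
  using assms unfolding in_window_def by auto

lemma integral_diff_mult_diff:
  fixes f g h k :: "'a \<Rightarrow> real"
  assumes "integrable M (\<lambda>\<omega>. f \<omega> * h \<omega>)" "integrable M (\<lambda>\<omega>. f \<omega> * k \<omega>)"
    and "integrable M (\<lambda>\<omega>. g \<omega> * h \<omega>)" "integrable M (\<lambda>\<omega>. g \<omega> * k \<omega>)"
  shows "(\<integral>\<omega>. (f \<omega> - g \<omega>) * (h \<omega> - k \<omega>) \<partial>M)
       = (\<integral>\<omega>. f \<omega> * h \<omega> \<partial>M) - (\<integral>\<omega>. f \<omega> * k \<omega> \<partial>M) - (\<integral>\<omega>. g \<omega> * h \<omega> \<partial>M) + (\<integral>\<omega>. g \<omega> * k \<omega> \<partial>M)"
proof -
  have "(\<lambda>\<omega>. (f \<omega> - g \<omega>) * (h \<omega> - k \<omega>)) = (\<lambda>\<omega>. f \<omega> * h \<omega> - f \<omega> * k \<omega> - g \<omega> * h \<omega> + g \<omega> * k \<omega>)"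
    by (simp add: fun_eq_iff algebra_simps)
  then show ?thesis using assms by simp
qed

lemma kappa_eq_kappa_sum:
  assumes fbm: "is_fBM (M H) H (W H)" and H: "0 \<le> H" "H \<le> 1"
  shows "kappa M W p a H = kappa_sum p a (frakW_moment p a H)"
  unfolding kappa_def kappa_sum_def
proof (intro arg_cong[where f="\<lambda>x. _ * x"] sum.cong refl arg_cong[where f="\<lambda>x. _ * x"], clarify)
  fix l r1 r2
  assume "l \<in> {- (2^p - 1) .. 2^p - 1 :: int}" and "(r1, r2) \<in> kappa_idx a"
  then have l: "in_window p (2^p)" "in_window p 0" "in_window p (2^p + l)" "in_window p l"
    and r: "multi_index r1" "multi_index r2" "sum_list r1 + sum_list r2 = 2*a"
    by (auto simp: in_window_kappa_translates kappa_idx_def multi_index_def)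
  note moment = is_fBM_integral_frakW_mult[OF fbm H r]
  show "(-1) ^ (length r1 + length r2) / (real (length r1) * real (length r2)) *
      (\<integral>\<omega>. (frakW (W H) p (2^p) r1 \<omega> - frakW (W H) p 0 r1 \<omega>) * (frakW (W H) p (2^p + l) r2 \<omega> - frakW (W H) p l r2 \<omega>) \<partial>M H)
    = (-1) ^ (length r1 + length r2) / (real (length r1) * real (length r2)) *
      (frakW_moment p a H (2^p) r1 (2^p + l) r2 - frakW_moment p a H (2^p) r1 l r2
        - frakW_moment p a H 0 r1 (2^p + l) r2 + frakW_moment p a H 0 r1 l r2)"
    by (simp add: integral_diff_mult_diff moment l)
qed

lemma kappa_sum_has_derivative:
  assumes "\<And>lA rA lB rB. in_window p lA \<Longrightarrow> in_window p lB \<Longrightarrow>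
      ((\<lambda>H. F H lA rA lB rB) has_real_derivative F' lA rA lB rB) (at H within S)"
  shows "((\<lambda>H. kappa_sum p a (F H)) has_real_derivative kappa_sum p a F') (at H within S)"
  unfolding kappa_sum_def
proof (intro DERIV_cmult DERIV_sum, clarify)
  fix l r1 r2
  assume "l \<in> {- (2^p - 1) .. 2^p - 1 :: int}"
  note w = in_window_kappa_translates[OF this]
  show "((\<lambda>H. (-1) ^ (length r1 + length r2) / (real (length r1) * real (length r2)) *
      (F H (2^p) r1 (2^p + l) r2 - F H (2^p) r1 l r2 - F H 0 r1 (2^p + l) r2 + F H 0 r1 l r2))
    has_real_derivative (-1) ^ (length r1 + length r2) / (real (length r1) * real (length r2)) *
      (F' (2^p) r1 (2^p + l) r2 - F' (2^p) r1 l r2 - F' 0 r1 (2^p + l) r2 + F' 0 r1 l r2)) (at H within S)"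
    by (intro DERIV_cmult DERIV_add DERIV_diff assms w)
qed

lemma abs_neg_one_power_div_le_1: "\<bar>(-1) ^ n / (real m * real m')\<bar> \<le> (1::real)"
proof (cases "m = 0 \<or> m' = 0")
  case False
  then have "1 \<le> m * m'" by simp
  then have "1 \<le> real m * real m'" by (metis of_nat_1 of_nat_le_iff of_nat_mult)
  then show ?thesis by (simp add: abs_divide abs_mult)
qed auto

lemma abs_kappa_sum_le:
  assumes F: "\<And>lA rA lB rB. in_window p lA \<Longrightarrow> in_window p lB \<Longrightarrow> \<bar>F lA rA lB rB\<bar> \<le> B"
  shows "\<bar>kappa_sum p a F\<bar> \<le> 8 * real (card (kappa_idx a)) * B"
proof -
  let ?C = "real (card (kappa_idx a)) * (4 * B)"
  let ?L = "{- (2^p - 1) .. 2^p - 1 :: int}"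
  have "in_window p 0" by (simp add: in_window_def)
  then have "0 \<le> B" using F[of 0 0] by (meson abs_ge_zero order_trans)
  have inner: "\<bar>\<Sum>(r1, r2)\<in>kappa_idx a. (-1) ^ (length r1 + length r2) / (real (length r1) * real (length r2)) *
         (F (2^p) r1 (2^p + l) r2 - F (2^p) r1 l r2 - F 0 r1 (2^p + l) r2 + F 0 r1 l r2)\<bar> \<le> ?C"
    if "l \<in> ?L" for l
  proof (rule abs_sum_le_card_mult, clarify)
    fix r1 r2
    note w = in_window_kappa_translates[OF that]
    have "\<bar>F (2^p) r1 (2^p + l) r2 - F (2^p) r1 l r2 - F 0 r1 (2^p + l) r2 + F 0 r1 l r2\<bar> \<le> 4 * B"
      using F[OF w(1) w(3), where rA=r1 and rB=r2] F[OF w(1) w(4), where rA=r1 and rB=r2]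
        F[OF w(2) w(3), where rA=r1 and rB=r2] F[OF w(2) w(4), where rA=r1 and rB=r2] by linarith
    then have "\<bar>(-1) ^ (length r1 + length r2) / (real (length r1) * real (length r2))\<bar> *
        \<bar>F (2^p) r1 (2^p + l) r2 - F (2^p) r1 l r2 - F 0 r1 (2^p + l) r2 + F 0 r1 l r2\<bar> \<le> 1 * (4 * B)"
      using abs_neg_one_power_div_le_1 by (intro mult_mono) auto
    then show "\<bar>(-1) ^ (length r1 + length r2) / (real (length r1) * real (length r2)) *
         (F (2^p) r1 (2^p + l) r2 - F (2^p) r1 l r2 - F 0 r1 (2^p + l) r2 + F 0 r1 l r2)\<bar> \<le> 4 * B"
      by (simp add: abs_mult)
  qed
  have "\<bar>\<Sum>l\<in>?L. (2^p - \<bar>of_int l\<bar>) * (\<Sum>(r1, r2)\<in>kappa_idx a. (-1) ^ (length r1 + length r2) /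
      (real (length r1) * real (length r2)) * (F (2^p) r1 (2^p + l) r2 - F (2^p) r1 l r2 - F 0 r1 (2^p + l) r2 + F 0 r1 l r2))\<bar>
      \<le> real (card ?L) * (2^p * ?C)" (is "\<bar>?S\<bar> \<le> _")
  proof (rule abs_sum_le_card_mult)
    fix l assume l: "l \<in> ?L"
    then have "\<bar>(2::real)^p - \<bar>of_int l\<bar>\<bar> \<le> 2^p" by (auto simp flip: of_int_abs)
    then show "\<bar>(2^p - \<bar>of_int l\<bar>) * (\<Sum>(r1, r2)\<in>kappa_idx a. (-1) ^ (length r1 + length r2) /
      (real (length r1) * real (length r2)) * (F (2^p) r1 (2^p + l) r2 - F (2^p) r1 l r2 - F 0 r1 (2^p + l) r2 + F 0 r1 l r2))\<bar>
      \<le> 2^p * ?C"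
      unfolding abs_mult using inner[OF l] \<open>0 \<le> B\<close> by (intro mult_mono) auto
  qed
  moreover have "real (card ?L) * (2^p * ?C) \<le> (2 * 2^p) * (2^p * ?C)"
    using \<open>0 \<le> B\<close> by (intro mult_right_mono) auto
  ultimately have "\<bar>?S\<bar> \<le> (2 * 2^p) * (2^p * ?C)" by (rule order_trans)
  then have "\<bar>kappa_sum p a F\<bar> \<le> 2 powr (- 2 * real p) * ((2 * 2^p) * (2^p * ?C))"
    unfolding kappa_sum_def abs_mult abs_of_nonneg[OF powr_ge_zero] by (rule mult_left_mono) simp
  also have "2 powr (- 2 * real p) * ((2 * 2^p) * (2^p * ?C)) = 2 * ?C"
    by (simp add: powr_minus powr_realpow[symmetric] powr_add[symmetric] field_simps)
  finally show ?thesis by simp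
qed

theorem lemma2:
  fixes Hm Hp :: real
    and M :: "real \<Rightarrow> 'a measure" and W :: "real \<Rightarrow> real \<Rightarrow> 'a \<Rightarrow> real"
  assumes "0 < Hm" and "Hm \<le> Hp" and "Hp < 3/4"
    and fbm: "\<forall>H\<in>{Hm..Hp}. is_fBM (M H) H (W H)"
  shows "\<forall>a::nat. a \<ge> 1 \<longrightarrow>
           (\<forall>p::nat. kappa M W p a differentiable_on {Hm..Hp}) \<and>
           (\<exists>c::real. \<forall>p::nat. \<forall>H\<in>{Hm..Hp}. \<exists>D.
               (kappa M W p a has_real_derivative D) (at H within {Hm..Hp}) \<and> \<bar>D\<bar> \<le> c)"
proof (intro allI impI)
  fix a :: nat
  have Hm: "0 < Hm" and Hp: "Hp \<le> 1" using assms by auto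
  let ?D = "\<lambda>p H. kappa_sum p a (frakW_moment_deriv p a H)"
  let ?c = "8 * real (card (kappa_idx a)) * mixed_moment_deriv_bound a 16 (3 * (1 / (2*Hm) + 48))"
  have deriv: "(kappa M W p a has_real_derivative ?D p H) (at H within {Hm..Hp})" if H: "H \<in> {Hm..Hp}" for p H
  proof (rule has_field_derivative_transform_within[where d=1])
    show "((\<lambda>H. kappa_sum p a (frakW_moment p a H)) has_real_derivative ?D p H) (at H within {Hm..Hp})"
      using Hm Hp H by (intro kappa_sum_has_derivative frakW_moment_has_derivative)
    show "kappa_sum p a (frakW_moment p a H') = kappa M W p a H'" if "H' \<in> {Hm..Hp}" for H'
      using that fbm Hm Hp by (simp add: kappa_eq_kappa_sum)
  qed (use H in auto)
  have bound: "\<bar>?D p H\<bar> \<le> ?c" if "H \<in> {Hm..Hp}" for p H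
    using that Hm Hp by (intro abs_kappa_sum_le abs_frakW_moment_deriv_le) auto
  show "(\<forall>p. kappa M W p a differentiable_on {Hm..Hp}) \<and>
      (\<exists>c. \<forall>p. \<forall>H\<in>{Hm..Hp}. \<exists>D. (kappa M W p a has_real_derivative D) (at H within {Hm..Hp}) \<and> \<bar>D\<bar> \<le> c)"
  proof (intro conjI allI)
    show "kappa M W p a differentiable_on {Hm..Hp}" for p
      unfolding differentiable_on_def using differentiableI[OF deriv[unfolded has_field_derivative_def]] by blast
    show "\<exists>c. \<forall>p. \<forall>H\<in>{Hm..Hp}. \<exists>D. (kappa M W p a has_real_derivative D) (at H within {Hm..Hp}) \<and> \<bar>D\<bar> \<le> c"
      using deriv bound by blast
  qed
qed

end
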